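(* Under the standing setup (C1)–(C4), there is a constant $\tilde C>0$ such that whenever $N\ge n>m\ge[N^{1-\gamma}]\ge n_0$, $$E\Big(\sum_{k=m+1}^nR(k)\Big)^4\le\tilde C(n-m)^2,\qquad R(k)=\prod_{j=1}^\ell X_j(q_j(k))-\prod_{j=1}^\ell a_j .$$
   Context: Standing setup. $(\Omega,\mathcal F,P)$ is a probability space, $\ell\ge1$, $X_1,\dots,X_\ell$ are real stationary processes $X_j(n)$, $n\ge0$, with $|X_j(n)|\le D$ a.s. $\{\mathcal F_{kl}\}$ is a family of sub-$\sigma$-algebras, $\mathcal F_{kl}\subset\mathcal F_{k'l'}$ for $k'\le k$, $l'\ge l$. $\alpha(n)=\sup_{k\ge0}\sup_{A\in\mathcal F_{-\infty,k},B\in\mathcal F_{k+n,\infty}}|P(A\cap B)-P(A)P(B)|$, $\beta_j(n)=\sup_{m\ge0}E|X_j(m)-E(X_j(m)\mid\mathcal F_{m-n,m+n})|$. (C1): $\alpha(n)+\max_j\beta_j(n)\le\kappa^{-1}e^{-\kappa n}$ for some $\kappa>0$ and all $n$. (C2): $q_1(n)=rn+p$ with integers $r>0,p\ge0$. There exist $\gamma\in(0,1)$, $n_0>1$ such that for $n\ge n_0$: (C3) $q_j(n+1)\ge q_j(n)+n^\gamma$ for $j=2,\dots,\ell$; (C4) $q_{j+1}([n^{1-\gamma}])\ge q_j(n)n^\gamma$ for $j=1,\dots,\ell-1$. All $q_j$ take nonnegative integer values on nonnegative integers. $a_j=EX_j(0)$. *)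

theory Defs
  imports "HOL-Probability.Probability"
begin

definition ext_int_idx :: "ereal set" where
  "ext_int_idx = {-\<infinity>, \<infinity>} \<union> range (\<lambda>z::int. ereal (real_of_int z))"

definition alpha_mix :: "'a measure \<Rightarrow> (ereal \<Rightarrow> ereal \<Rightarrow> 'a measure) \<Rightarrow> nat \<Rightarrow> real" where
  "alpha_mix M F n = Sup {\<bar>measure M (A \<inter> B) - measure M A * measure M B\<bar> | k A B.
      (k::int) \<ge> 0 \<and> A \<in> sets (F (-\<infinity>) (ereal (real_of_int k)))
      \<and> B \<in> sets (F (ereal (real_of_int (k + int n))) \<infinity>)}"

definition beta_approx :: "'a measure \<Rightarrow> (ereal \<Rightarrow> ereal \<Rightarrow> 'a measure) \<Rightarrow> (nat \<Rightarrow> 'a \<Rightarrow> real) \<Rightarrow> nat \<Rightarrow> real" where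
  "beta_approx M F Y n = Sup {prob_space.expectation M (\<lambda>\<omega>. \<bar>Y m \<omega> -
      real_cond_exp M (F (ereal (real_of_int (int m - int n))) (ereal (real_of_int (int m + int n)))) (Y m) \<omega>\<bar>)
      | m. True}"

definition stationary_proc :: "'a measure \<Rightarrow> (nat \<Rightarrow> 'a \<Rightarrow> real) \<Rightarrow> bool" where
  "stationary_proc M Y \<longleftrightarrow> (\<forall>n. Y n \<in> borel_measurable M) \<and>
     (\<forall>k. distr M (Pi\<^sub>M UNIV (\<lambda>_. borel)) (\<lambda>\<omega> n. Y (n + k) \<omega>)
        = distr M (Pi\<^sub>M UNIV (\<lambda>_. borel)) (\<lambda>\<omega> n. Y n \<omega>))"

end

theory Submission
  imports Defs
begin

(* Telescoping the product difference splits
   sum_k R(k) into L sums S_i = sum_k (X_i(q_i k) - a_i) * prod_{j>i} X_j(q_j k), weighted by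
   the constants prod_{j<i} a_j, so it suffices to bound E S_i^4 by O((n-m)^2).

   Expanding S_i^4 gives moments of products of "factors" X_j(t) - c indexed by ordered 4-tuples
   k1 <= k2 <= k3 <= k4.  A covariance inequality for alpha-mixing sigma-algebras, combined with
   replacing each factor by its conditional expectation on a window of radius s (error controlled
   by beta(s)), shows that products of factors separated by a time gap d are almost uncorrelated,
   up to O(exp(-kappa d/3)).  Since the lead factor X_i(q_i k) - a_i is centred, a sorted 4-tuple
   has moment O(rho^(g1+g2) + rho^(g1+g3)) in its gaps g1, g2, g3, and summing these geometric
   weights over all tuples yields O((n-m)^2).  Conditions (C2)-(C4) provide exactly the needed
   geometry: the q_j grow at least linearly, and q_i < q_j for i < j on [N^(1-gamma), N]. *)

lemma abs_mult_diff_le: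
  fixes x y x' y' :: real
  shows "\<bar>x * y - x' * y'\<bar> \<le> \<bar>x - x'\<bar> * \<bar>y\<bar> + \<bar>x'\<bar> * \<bar>y - y'\<bar>"
proof -
  have "x * y - x' * y' = (x - x') * y + x' * (y - y')" by (simp add: algebra_simps)
  then show ?thesis by (metis abs_mult abs_triangle_ineq)
qed

abbreviation lists_of_length :: "'b set \<Rightarrow> nat \<Rightarrow> 'b list set" where
  "lists_of_length K n \<equiv> {xs. set xs \<subseteq> K \<and> length xs = n}"

lemma sum_lists_of_length_Suc:
  fixes G :: "'b list \<Rightarrow> real"
  assumes K: "finite K"
  shows "(\<Sum>xs\<in>lists_of_length K (Suc n). G xs) = (\<Sum>x\<in>K. \<Sum>xs\<in>lists_of_length K n. G (x # xs))"
proof -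
  have inj: "inj_on (\<lambda>(xs, x). x # xs) (lists_of_length K n \<times> K)" by (auto simp: inj_on_def)
  have "(\<Sum>xs\<in>lists_of_length K (Suc n). G xs)
      = (\<Sum>xs\<in>(\<lambda>(xs, x). x # xs) ` (lists_of_length K n \<times> K). G xs)"
    by (simp only: lists_length_Suc_eq)
  also have "\<dots> = (\<Sum>(xs, x)\<in>lists_of_length K n \<times> K. G (x # xs))"
    by (subst sum.reindex[OF inj]) (simp add: case_prod_beta')
  also have "\<dots> = (\<Sum>x\<in>K. \<Sum>xs\<in>lists_of_length K n. G (x # xs))"
    by (subst sum.cartesian_product[symmetric]) (rule sum.swap)
  finally show ?thesis .
qed

lemma lists_of_length_0: "lists_of_length K 0 = {[]}"
  by auto

lemma power_sum_as_lists:
  fixes f :: "'b \<Rightarrow> real"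
  assumes K: "finite K"
  shows "(\<Sum>k\<in>K. f k) ^ n = (\<Sum>xs\<in>lists_of_length K n. \<Prod>k\<leftarrow>xs. f k)"
proof (induction n)
  case (Suc n)
  have "(\<Sum>k\<in>K. f k) ^ Suc n = (\<Sum>k\<in>K. f k) * (\<Sum>xs\<in>lists_of_length K n. \<Prod>k\<leftarrow>xs. f k)"
    using Suc by simp
  also have "\<dots> = (\<Sum>x\<in>K. \<Sum>xs\<in>lists_of_length K n. \<Prod>k\<leftarrow>x # xs. f k)"
    by (simp add: sum_product)
  also have "\<dots> = (\<Sum>xs\<in>lists_of_length K (Suc n). \<Prod>k\<leftarrow>xs. f k)"
    by (rule sum_lists_of_length_Suc[OF K, symmetric])
  finally show ?case .
qed (simp only: lists_of_length_0, simp)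

lemma sum_lists_of_length_4:
  fixes G :: "'b list \<Rightarrow> real"
  assumes K: "finite K"
  shows "(\<Sum>xs\<in>lists_of_length K 4. G xs) = (\<Sum>a\<in>K. \<Sum>b\<in>K. \<Sum>c\<in>K. \<Sum>d\<in>K. G [a, b, c, d])"
proof -
  have "(4::nat) = Suc (Suc (Suc (Suc 0)))" by simp
  then show ?thesis by (simp only: sum_lists_of_length_Suc[OF K] lists_of_length_0) simp
qed

text \<open>A symmetric function of 4-tuples is summed over all tuples at the cost of at most 4^4 times
  its sum over the sorted ones, since each sorted tuple is hit by at most 4^4 orderings.\<close>
lemma sum_sorted_lists_4:
  fixes G :: "'b::linorder list \<Rightarrow> real"
  assumes K: "finite K" and G_nonneg: "\<And>xs. xs \<in> lists_of_length K 4 \<Longrightarrow> 0 \<le> G xs"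
  shows "(\<Sum>xs\<in>lists_of_length K 4. G (sort xs))
    \<le> 256 * (\<Sum>xs\<in>lists_of_length K 4. if sorted xs then G xs else 0)"
proof -
  let ?S = "lists_of_length K 4" and ?T = "{ys \<in> lists_of_length K 4. sorted ys}"
  have fS: "finite ?S" using finite_lists_length_eq[OF K] by simp
  have fT: "finite ?T" using fS by (rule finite_subset[rotated]) auto
  have "(\<Sum>xs\<in>?S. G (sort xs)) = (\<Sum>y\<in>?T. \<Sum>xs\<in>{x \<in> ?S. sort x = y}. G (sort xs))"
    by (rule sum.group[OF fS fT, symmetric]) auto
  also have "\<dots> = (\<Sum>y\<in>?T. card {x \<in> ?S. sort x = y} * G y)"
    by (rule sum.cong) auto
  also have "\<dots> \<le> (\<Sum>y\<in>?T. 256 * G y)"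
  proof (rule sum_mono)
    fix y assume y: "y \<in> ?T"
    have "card {x \<in> ?S. sort x = y} \<le> card (lists_of_length (set y) 4)"
      by (rule card_mono) (auto simp: finite_lists_length_eq)
    also have "\<dots> = card (set y) ^ 4" by (simp add: card_lists_length_eq)
    also have "\<dots> \<le> 4 ^ 4" using card_length[of y] y by (intro power_mono) auto
    finally have "real (card {x \<in> ?S. sort x = y}) \<le> 256" by simp
    then show "real (card {x \<in> ?S. sort x = y}) * G y \<le> 256 * G y"
      using G_nonneg y by (intro mult_right_mono) auto
  qed
  also have "\<dots> = 256 * (\<Sum>y\<in>?T. G y)" by (simp add: sum_distrib_left)
  also have "(\<Sum>y\<in>?T. G y) = (\<Sum>xs\<in>?S. if sorted xs then G xs else 0)"
    by (rule sum.inter_filter[OF fS])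
  finally show ?thesis .
qed

definition geo_weight :: "real \<Rightarrow> nat \<Rightarrow> nat \<Rightarrow> real" where
  "geo_weight \<rho> a b = (if a \<le> b then \<rho> ^ (b - a) else 0)"

lemma geo_weight_nonneg: "0 \<le> \<rho> \<Longrightarrow> 0 \<le> geo_weight \<rho> a b"
  unfolding geo_weight_def by simp

lemma geo_weight_sum:
  assumes \<rho>: "0 \<le> \<rho>" "\<rho> < 1" and K: "finite K"
  shows "(\<Sum>b\<in>K. geo_weight \<rho> a b) \<le> 1 / (1 - \<rho>)"
proof -
  have "(\<Sum>b\<in>K. geo_weight \<rho> a b) = (\<Sum>b\<in>{b \<in> K. a \<le> b}. \<rho> ^ (b - a))"
    unfolding geo_weight_def by (rule sum.inter_filter[OF K, symmetric])
  also have "\<dots> = (\<Sum>i\<in>(\<lambda>b. b - a) ` {b \<in> K. a \<le> b}. \<rho> ^ i)"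
    by (subst sum.reindex) (auto simp: inj_on_def)
  also have "\<dots> \<le> (\<Sum>i. \<rho> ^ i)"
    by (rule sum_le_suminf) (use \<rho> K in \<open>auto intro: summable_geometric\<close>)
  also have "\<dots> = 1 / (1 - \<rho>)" using suminf_geometric[of \<rho>] \<rho> by simp
  finally show ?thesis .
qed

lemma geo_weight_sum_4:
  fixes w :: "nat \<Rightarrow> nat \<Rightarrow> nat \<Rightarrow> real" and S :: real
  assumes \<rho>: "0 \<le> \<rho>" and S: "\<And>a. (\<Sum>b\<in>K. geo_weight \<rho> a b) \<le> S" "0 \<le> S"
    and w: "\<And>b. (\<Sum>c\<in>K. \<Sum>d\<in>K. w b c d) \<le> card K * S"
  shows "(\<Sum>a\<in>K. \<Sum>b\<in>K. \<Sum>c\<in>K. \<Sum>d\<in>K. geo_weight \<rho> a b * w b c d) \<le> real (card K) ^ 2 * S ^ 2"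
proof -
  let ?T = "real (card K)"
  have inner: "(\<Sum>b\<in>K. \<Sum>c\<in>K. \<Sum>d\<in>K. geo_weight \<rho> a b * w b c d) \<le> ?T * S * S" for a
  proof -
    have "(\<Sum>b\<in>K. \<Sum>c\<in>K. \<Sum>d\<in>K. geo_weight \<rho> a b * w b c d)
        = (\<Sum>b\<in>K. geo_weight \<rho> a b * (\<Sum>c\<in>K. \<Sum>d\<in>K. w b c d))"
      by (simp add: sum_distrib_left)
    also have "\<dots> \<le> (\<Sum>b\<in>K. geo_weight \<rho> a b * (?T * S))"
      using w geo_weight_nonneg[OF \<rho>] by (intro sum_mono mult_left_mono) auto
    also have "\<dots> = ?T * S * (\<Sum>b\<in>K. geo_weight \<rho> a b)"
      by (simp add: sum_distrib_left mult_ac)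
    also have "\<dots> \<le> ?T * S * S"
      using S by (intro mult_left_mono) auto
    finally show ?thesis .
  qed
  have "(\<Sum>a\<in>K. \<Sum>b\<in>K. \<Sum>c\<in>K. \<Sum>d\<in>K. geo_weight \<rho> a b * w b c d) \<le> (\<Sum>a\<in>K. ?T * S * S)"
    by (rule sum_mono) (rule inner)
  also have "\<dots> = ?T ^ 2 * S ^ 2" by (simp add: power2_eq_square)
  finally show ?thesis .
qed

text \<open>The two weight patterns arising from sorted 4-tuples: chained gaps and disjoint gaps.\<close>
lemma geo_weight_chain_sum:
  assumes \<rho>: "0 \<le> \<rho>" "\<rho> < 1" and K: "finite K"
  shows "(\<Sum>a\<in>K. \<Sum>b\<in>K. \<Sum>c\<in>K. \<Sum>d\<in>K. geo_weight \<rho> a b * geo_weight \<rho> b c)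
    \<le> real (card K) ^ 2 * (1 / (1 - \<rho>)) ^ 2"
proof (rule geo_weight_sum_4[OF \<rho>(1) geo_weight_sum[OF \<rho> K]])
  fix b
  have "(\<Sum>c\<in>K. \<Sum>d\<in>K. geo_weight \<rho> b c) = card K * (\<Sum>c\<in>K. geo_weight \<rho> b c)"
    by (simp add: sum_distrib_left)
  also have "\<dots> \<le> card K * (1 / (1 - \<rho>))"
    by (rule mult_left_mono[OF geo_weight_sum[OF \<rho> K]]) simp
  finally show "(\<Sum>c\<in>K. \<Sum>d\<in>K. geo_weight \<rho> b c) \<le> card K * (1 / (1 - \<rho>))" .
qed (use \<rho> in simp)

lemma geo_weight_pair_sum:
  assumes \<rho>: "0 \<le> \<rho>" "\<rho> < 1" and K: "finite K"
  shows "(\<Sum>a\<in>K. \<Sum>b\<in>K. \<Sum>c\<in>K. \<Sum>d\<in>K. geo_weight \<rho> a b * geo_weight \<rho> c d)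
    \<le> real (card K) ^ 2 * (1 / (1 - \<rho>)) ^ 2"
proof (rule geo_weight_sum_4[OF \<rho>(1) geo_weight_sum[OF \<rho> K]])
  have "(\<Sum>c\<in>K. \<Sum>d\<in>K. geo_weight \<rho> c d) \<le> (\<Sum>c\<in>K. 1 / (1 - \<rho>))"
    by (rule sum_mono) (rule geo_weight_sum[OF \<rho> K])
  then show "(\<Sum>c\<in>K. \<Sum>d\<in>K. geo_weight \<rho> c d) \<le> card K * (1 / (1 - \<rho>))" by simp
qed (use \<rho> in simp)

lemma power4_sum_le:
  fixes f :: "nat \<Rightarrow> real"
  shows "(\<Sum>i\<in>I. f i) ^ 4 \<le> real (card I) ^ 3 * (\<Sum>i\<in>I. f i ^ 4)"
proof -
  have "(\<Sum>i\<in>I. f i) ^ 4 = ((\<Sum>i\<in>I. f i)\<^sup>2)\<^sup>2" by simp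
  also have "\<dots> \<le> ((\<Sum>i\<in>I. (f i)\<^sup>2) * card I)\<^sup>2"
    using sum_squared_le_sum_of_squares[of f I] by (intro power_mono) auto
  also have "\<dots> = (\<Sum>i\<in>I. (f i)\<^sup>2)\<^sup>2 * (real (card I))\<^sup>2" by (simp add: power_mult_distrib)
  also have "\<dots> \<le> (\<Sum>i\<in>I. ((f i)\<^sup>2)\<^sup>2) * card I * (real (card I))\<^sup>2"
    using sum_squared_le_sum_of_squares[of "\<lambda>i. (f i)\<^sup>2" I] by (intro mult_right_mono) auto
  also have "\<dots> = real (card I) ^ 3 * (\<Sum>i\<in>I. f i ^ 4)"
  proof -
    have e: "(\<lambda>i. ((f i)\<^sup>2)\<^sup>2) = (\<lambda>i. f i ^ 4)" by (simp add: fun_eq_iff flip: power_mult)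
    show ?thesis unfolding e by (simp add: power2_eq_square power3_eq_cube mult_ac)
  qed
  finally show ?thesis .
qed

lemma prod_diff_telescope:
  fixes x y :: "nat \<Rightarrow> real"
  shows "(\<Prod>j\<in>{1..n}. x j) - (\<Prod>j\<in>{1..n}. y j)
    = (\<Sum>i\<in>{1..n}. (\<Prod>j\<in>{1..<i}. y j) * (x i - y i) * (\<Prod>j\<in>{Suc i..n}. x j))"
proof (induction n)
  case (Suc n)
  have split_last: "(\<Prod>j\<in>{1..Suc n}. z j) = (\<Prod>j\<in>{1..n}. z j) * z (Suc n)" for z :: "nat \<Rightarrow> real"
    by (simp add: prod.atLeast1_atMost_eq prod.nat_ivl_Suc' mult.commute)
  have tail: "(\<Prod>j\<in>{Suc i..Suc n}. x j) = (\<Prod>j\<in>{Suc i..n}. x j) * x (Suc n)" if "i \<in> {1..n}" for i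
  proof -
    have "{Suc i..Suc n} = insert (Suc n) {Suc i..n}" using that by auto
    then show ?thesis by (simp add: mult.commute)
  qed
  have "(\<Sum>i\<in>{1..Suc n}. (\<Prod>j\<in>{1..<i}. y j) * (x i - y i) * (\<Prod>j\<in>{Suc i..Suc n}. x j))
      = (\<Sum>i\<in>{1..n}. (\<Prod>j\<in>{1..<i}. y j) * (x i - y i) * (\<Prod>j\<in>{Suc i..Suc n}. x j))
        + (\<Prod>j\<in>{1..<Suc n}. y j) * (x (Suc n) - y (Suc n))"
    by (simp add: sum.atLeast1_atMost_eq sum.nat_ivl_Suc')
  also have "(\<Sum>i\<in>{1..n}. (\<Prod>j\<in>{1..<i}. y j) * (x i - y i) * (\<Prod>j\<in>{Suc i..Suc n}. x j))
      = (\<Sum>i\<in>{1..n}. (\<Prod>j\<in>{1..<i}. y j) * (x i - y i) * (\<Prod>j\<in>{Suc i..n}. x j)) * x (Suc n)"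
    unfolding sum_distrib_right by (rule sum.cong[OF refl]) (simp add: tail mult.assoc)
  also have "{1..<Suc n} = {1..n}" by auto
  finally show ?case unfolding split_last Suc[symmetric] by (simp add: algebra_simps)
qed simp

lemma sum_prod_centering:
  fixes x :: "nat \<Rightarrow> nat \<Rightarrow> real" and m :: "nat \<Rightarrow> real"
  shows "(\<Sum>k\<in>K. (\<Prod>j\<in>{1..L}. x j k) - (\<Prod>j\<in>{1..L}. m j))
    = (\<Sum>i\<in>{1..L}. (\<Prod>j\<in>{1..<i}. m j) * (\<Sum>k\<in>K. (x i k - m i) * (\<Prod>j\<in>{Suc i..L}. x j k)))"
proof -
  have "(\<Sum>k\<in>K. (\<Prod>j\<in>{1..L}. x j k) - (\<Prod>j\<in>{1..L}. m j))
      = (\<Sum>k\<in>K. \<Sum>i\<in>{1..L}. (\<Prod>j\<in>{1..<i}. m j) * ((x i k - m i) * (\<Prod>j\<in>{Suc i..L}. x j k)))"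
    by (intro sum.cong refl) (simp only: prod_diff_telescope mult.assoc)
  also have "\<dots> = (\<Sum>i\<in>{1..L}. (\<Prod>j\<in>{1..<i}. m j) * (\<Sum>k\<in>K. (x i k - m i) * (\<Prod>j\<in>{Suc i..L}. x j k)))"
    unfolding sum_distrib_left by (rule sum.swap)
  finally show ?thesis .
qed

context prob_space
begin

lemma sigma_finite_subalgebra_of_subalgebra:
  "subalgebra M G \<Longrightarrow> sigma_finite_subalgebra M G"
  by (rule finite_measure_subalgebra_is_sigma_finite)
     (simp add: finite_measure_subalgebra_def finite_measure_subalgebra_axioms_def finite_measure_axioms)

lemma integrable_bounded:
  "(f::'a \<Rightarrow> real) \<in> borel_measurable M \<Longrightarrow> AE x in M. \<bar>f x\<bar> \<le> c \<Longrightarrow> integrable M f"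
  by (rule integrable_const_bound[where B=c]) auto

lemma integrable_bounded_mult:
  fixes f h :: "'a \<Rightarrow> real"
  assumes "f \<in> borel_measurable M" "h \<in> borel_measurable M"
    and "AE x in M. \<bar>f x\<bar> \<le> b" "AE x in M. \<bar>h x\<bar> \<le> c"
  shows "integrable M (\<lambda>x. f x * h x)"
proof (rule integrable_bounded[where c="\<bar>b\<bar> * \<bar>c\<bar>"])
  show "AE x in M. \<bar>f x * h x\<bar> \<le> \<bar>b\<bar> * \<bar>c\<bar>"
    using assms(3,4) by eventually_elim (auto simp: abs_mult intro: mult_mono)
qed (use assms(1,2) in simp)

text \<open>Conditioning on G the factor h of a covariance whose other factor f is G-measurable and bounded
  by b reduces the covariance to the L1 deviation of the conditional expectation of h.\<close>
lemma covariance_le_cond_exp_deviation: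
  fixes f h :: "'a \<Rightarrow> real"
  assumes sG: "subalgebra M G" and fG: "f \<in> borel_measurable G" and hM: "h \<in> borel_measurable M"
    and fb: "AE x in M. \<bar>f x\<bar> \<le> b" and hb: "AE x in M. \<bar>h x\<bar> \<le> c"
  shows "\<bar>expectation (\<lambda>x. f x * h x) - expectation f * expectation h\<bar>
    \<le> b * expectation (\<lambda>x. \<bar>real_cond_exp M G h x - expectation h\<bar>)"
proof -
  interpret G: sigma_finite_subalgebra M G by (rule sigma_finite_subalgebra_of_subalgebra[OF sG])
  define ch where "ch = real_cond_exp M G h"
  have fM: "f \<in> borel_measurable M" by (rule measurable_from_subalg[OF sG fG])
  have fi: "integrable M f" by (rule integrable_bounded[OF fM fb])
  have hi: "integrable M h" by (rule integrable_bounded[OF hM hb])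
  have fhi: "integrable M (\<lambda>x. f x * h x)" by (rule integrable_bounded_mult[OF fM hM fb hb])
  have chi: "integrable M ch" unfolding ch_def using hi by auto
  have fchi: "integrable M (\<lambda>x. f x * ch x)"
    unfolding ch_def using G.real_cond_exp_intg(1)[OF fhi fG hM] by simp
  have "expectation (\<lambda>x. f x * h x) - expectation f * expectation h
      = expectation (\<lambda>x. f x * (ch x - expectation h))"
    using G.real_cond_exp_intg(2)[OF fhi fG hM] fchi fi unfolding ch_def by (simp add: right_diff_distrib)
  also have "\<bar>\<dots>\<bar> \<le> expectation (\<lambda>x. b * \<bar>ch x - expectation h\<bar>)"
  proof (rule order_trans[OF integral_abs_bound], rule integral_mono_AE)
    show "AE x in M. \<bar>f x * (ch x - expectation h)\<bar> \<le> b * \<bar>ch x - expectation h\<bar>"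
      using fb by eventually_elim (auto simp: abs_mult intro: mult_right_mono)
  qed (use fchi fi chi in \<open>auto intro!: integrable_abs simp: right_diff_distrib\<close>)
  finally show ?thesis unfolding ch_def by simp
qed

text \<open>The L1 deviation of a conditional expectation is itself a covariance with a signed indicator
  of G-events (the sign of the deviation); this is what lets mixing of events control it.\<close>
lemma cond_exp_deviation_as_covariance:
  fixes h :: "'a \<Rightarrow> real"
  assumes sG: "subalgebra M G" and hM: "h \<in> borel_measurable M" and hb: "AE x in M. \<bar>h x\<bar> \<le> c"
  obtains A1 A2 where "A1 \<in> sets G" "A2 \<in> sets G"
    "expectation (\<lambda>x. \<bar>real_cond_exp M G h x - expectation h\<bar>)
      = expectation (\<lambda>x. (indicator A1 x - indicator A2 x) * h x)
        - expectation (\<lambda>x. indicator A1 x - indicator A2 x :: real) * expectation h"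
proof -
  interpret G: sigma_finite_subalgebra M G by (rule sigma_finite_subalgebra_of_subalgebra[OF sG])
  define ch where "ch = real_cond_exp M G h"
  define Eh where "Eh = expectation h"
  have spG: "space G = space M" using sG by (auto simp: subalgebra_def)
  have chG[measurable]: "ch \<in> borel_measurable G" unfolding ch_def by simp
  define A1 where "A1 = {x\<in>space M. Eh < ch x}"
  define A2 where "A2 = {x\<in>space M. ch x < Eh}"
  have A1G: "A1 \<in> sets G" unfolding A1_def spG[symmetric] by measurable
  have A2G: "A2 \<in> sets G" unfolding A2_def spG[symmetric] by measurable
  define \<xi> where "\<xi> = (\<lambda>x. indicator A1 x - indicator A2 x :: real)"
  have \<xi>G: "\<xi> \<in> borel_measurable G" unfolding \<xi>_def using A1G A2G by measurable
  have \<xi>M: "\<xi> \<in> borel_measurable M" by (rule measurable_from_subalg[OF sG \<xi>G])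
  have \<xi>b: "AE x in M. \<bar>\<xi> x\<bar> \<le> 1" unfolding \<xi>_def by (auto simp: indicator_def)
  have hi: "integrable M h" by (rule integrable_bounded[OF hM hb])
  have \<xi>i: "integrable M \<xi>" by (rule integrable_bounded[OF \<xi>M \<xi>b])
  have \<xi>hi: "integrable M (\<lambda>x. \<xi> x * h x)" by (rule integrable_bounded_mult[OF \<xi>M hM \<xi>b hb])
  have \<xi>chi: "integrable M (\<lambda>x. \<xi> x * ch x)"
    unfolding ch_def using G.real_cond_exp_intg(1)[OF \<xi>hi \<xi>G hM] by simp
  have "expectation (\<lambda>x. \<bar>ch x - Eh\<bar>) = expectation (\<lambda>x. \<xi> x * ch x - \<xi> x * Eh)"
    by (rule Bochner_Integration.integral_cong[OF refl]) (auto simp: \<xi>_def A1_def A2_def indicator_def)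
  also have "\<dots> = expectation (\<lambda>x. \<xi> x * ch x) - expectation \<xi> * Eh"
    using \<xi>chi \<xi>i by simp
  also have "expectation (\<lambda>x. \<xi> x * ch x) = expectation (\<lambda>x. \<xi> x * h x)"
    unfolding ch_def using G.real_cond_exp_intg(2)[OF \<xi>hi \<xi>G hM] by simp
  finally show ?thesis using A1G A2G that unfolding ch_def Eh_def \<xi>_def by blast
qed

lemma signed_indicator_covariance:
  assumes "A1 \<in> events" "A2 \<in> events" "B1 \<in> events" "B2 \<in> events"
  shows "expectation (\<lambda>x. (indicator B1 x - indicator B2 x) * (indicator A1 x - indicator A2 x :: real))
      - expectation (\<lambda>x. indicator B1 x - indicator B2 x :: real) * expectation (\<lambda>x. indicator A1 x - indicator A2 x :: real)
    = (prob (A1 \<inter> B1) - prob A1 * prob B1) - (prob (A2 \<inter> B1) - prob A2 * prob B1)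
      - (prob (A1 \<inter> B2) - prob A1 * prob B2) + (prob (A2 \<inter> B2) - prob A2 * prob B2)"
proof -
  have prod_ind: "(\<lambda>x. indicator B x * indicator A x :: real) = indicator (A \<inter> B)" for A B
    by (auto simp: indicator_def fun_eq_iff)
  have int1: "integrable M (indicator A :: 'a \<Rightarrow> real)" if "A \<in> events" for A
    using that by (simp add: emeasure_eq_measure)
  have int2: "integrable M (\<lambda>x. indicator B x * indicator A x :: real)"
    and ind2: "expectation (\<lambda>x. indicator B x * indicator A x :: real) = prob (A \<inter> B)"
    if "A \<in> events" "B \<in> events" for A B
    unfolding prod_ind using int1[of "A \<inter> B"] that by auto
  have "(\<lambda>x. (indicator B1 x - indicator B2 x) * (indicator A1 x - indicator A2 x :: real))
      = (\<lambda>x. (indicator B1 x * indicator A1 x - indicator B1 x * indicator A2 x)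
            - (indicator B2 x * indicator A1 x - indicator B2 x * indicator A2 x))"
    by (rule ext) (simp add: algebra_simps)
  then have cross: "expectation (\<lambda>x. (indicator B1 x - indicator B2 x) * (indicator A1 x - indicator A2 x :: real))
      = (prob (A1 \<inter> B1) - prob (A2 \<inter> B1)) - (prob (A1 \<inter> B2) - prob (A2 \<inter> B2))"
    using assms by (simp add: int2 ind2)
  have diff: "expectation (\<lambda>x. indicator A x - indicator B x :: real) = prob A - prob B"
    if "A \<in> events" "B \<in> events" for A B
    using that int1 by simp
  show ?thesis
    unfolding cross diff[OF assms(1,2)] diff[OF assms(3,4)] by (simp add: algebra_simps)
qed

lemma mixing_covariance_bound:
  fixes f h :: "'a \<Rightarrow> real"
  assumes sG: "subalgebra M G" and sH: "subalgebra M H"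
    and mix: "\<And>A B. A \<in> sets G \<Longrightarrow> B \<in> sets H \<Longrightarrow> \<bar>prob (A \<inter> B) - prob A * prob B\<bar> \<le> a"
    and fG: "f \<in> borel_measurable G" and hH: "h \<in> borel_measurable H"
    and fb: "AE x in M. \<bar>f x\<bar> \<le> b1" and hb: "AE x in M. \<bar>h x\<bar> \<le> b2"
    and b1: "b1 \<ge> 0" and b2: "b2 \<ge> 0"
  shows "\<bar>expectation (\<lambda>x. f x * h x) - expectation f * expectation h\<bar> \<le> 4 * b1 * b2 * a"
proof -
  have hM: "h \<in> borel_measurable M" by (rule measurable_from_subalg[OF sH hH])
  have evG: "A \<in> events" if "A \<in> sets G" for A using that sG by (auto simp: subalgebra_def)
  have evH: "B \<in> events" if "B \<in> sets H" for B using that sH by (auto simp: subalgebra_def)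
  obtain A1 A2 where A: "A1 \<in> sets G" "A2 \<in> sets G" and
    devG: "expectation (\<lambda>x. \<bar>real_cond_exp M G h x - expectation h\<bar>)
      = expectation (\<lambda>x. (indicator A1 x - indicator A2 x) * h x)
        - expectation (\<lambda>x. indicator A1 x - indicator A2 x :: real) * expectation h"
    by (rule cond_exp_deviation_as_covariance[OF sG hM hb])
  define \<xi> where "\<xi> = (\<lambda>x. indicator A1 x - indicator A2 x :: real)"
  have \<xi>M: "\<xi> \<in> borel_measurable M" unfolding \<xi>_def using evG[OF A(1)] evG[OF A(2)] by measurable
  have \<xi>b: "AE x in M. \<bar>\<xi> x\<bar> \<le> 1" unfolding \<xi>_def by (auto simp: indicator_def)
  obtain B1 B2 where B: "B1 \<in> sets H" "B2 \<in> sets H" and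
    devH: "expectation (\<lambda>x. \<bar>real_cond_exp M H \<xi> x - expectation \<xi>\<bar>)
      = expectation (\<lambda>x. (indicator B1 x - indicator B2 x) * \<xi> x)
        - expectation (\<lambda>x. indicator B1 x - indicator B2 x :: real) * expectation \<xi>"
    by (rule cond_exp_deviation_as_covariance[OF sH \<xi>M \<xi>b])
  let ?devH = "expectation (\<lambda>x. \<bar>real_cond_exp M H \<xi> x - expectation \<xi>\<bar>)"
  have "?devH = (prob (A1 \<inter> B1) - prob A1 * prob B1) - (prob (A2 \<inter> B1) - prob A2 * prob B1)
      - (prob (A1 \<inter> B2) - prob A1 * prob B2) + (prob (A2 \<inter> B2) - prob A2 * prob B2)"
    unfolding devH unfolding \<xi>_def
    by (rule signed_indicator_covariance[OF evG[OF A(1)] evG[OF A(2)] evH[OF B(1)] evH[OF B(2)]])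
  also have "\<dots> \<le> 4 * a"
    using mix[OF A(1) B(1)] mix[OF A(2) B(1)] mix[OF A(1) B(2)] mix[OF A(2) B(2)] by linarith
  finally have devH_le: "?devH \<le> 4 * a" .
  have "expectation (\<lambda>x. \<bar>real_cond_exp M G h x - expectation h\<bar>)
      = expectation (\<lambda>x. h x * \<xi> x) - expectation h * expectation \<xi>"
    unfolding devG \<xi>_def by (simp add: mult.commute)
  also have "\<dots> \<le> b2 * ?devH"
    using covariance_le_cond_exp_deviation[OF sH hH \<xi>M hb \<xi>b] by linarith
  also have "\<dots> \<le> b2 * (4 * a)"
    using devH_le b2 by (rule mult_left_mono)
  finally have "b1 * expectation (\<lambda>x. \<bar>real_cond_exp M G h x - expectation h\<bar>) \<le> b1 * (b2 * (4 * a))"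
    using b1 by (rule mult_left_mono)
  then show ?thesis
    using covariance_le_cond_exp_deviation[OF sG fG hM fb hb] by (simp add: mult_ac)
qed

lemma abs_expectation_le:
  "(f::'a \<Rightarrow> real) \<in> borel_measurable M \<Longrightarrow> AE x in M. \<bar>f x\<bar> \<le> c \<Longrightarrow> \<bar>expectation f\<bar> \<le> c"
proof -
  assume m: "f \<in> borel_measurable M" and b: "AE x in M. \<bar>f x\<bar> \<le> c"
  have "\<bar>expectation f\<bar> \<le> expectation (\<lambda>x. \<bar>f x\<bar>)" by (rule integral_abs_bound)
  also have "\<dots> \<le> expectation (\<lambda>x. c)"
  proof (rule integral_mono_AE')
    show "AE x in M. 0 \<le> c" using b by eventually_elim auto
  qed (use b in auto)
  finally show ?thesis by (simp add: prob_space)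
qed

lemma abs_expectation_diff_le:
  "integrable M (f::'a \<Rightarrow> real) \<Longrightarrow> integrable M g \<Longrightarrow>
    \<bar>expectation f - expectation g\<bar> \<le> expectation (\<lambda>x. \<bar>f x - g x\<bar>)"
proof -
  assume "integrable M f" "integrable M g"
  then have "expectation f - expectation g = expectation (\<lambda>x. f x - g x)" by simp
  then show ?thesis using integral_abs_bound by metis
qed

end

lemma index_growth:
  fixes q :: "nat \<Rightarrow> nat \<Rightarrow> nat" and \<gamma> n\<^sub>0 :: real
  assumes C2: "r > 0" "\<And>n. q 1 n = r * n + p" and \<gamma>: "0 < \<gamma>" and n0: "n\<^sub>0 > 1"
    and C3: "\<And>j n. j \<in> {2..L} \<Longrightarrow> real n \<ge> n\<^sub>0 \<Longrightarrow> real (q j (n + 1)) \<ge> real (q j n) + real n powr \<gamma>"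
    and j: "j \<in> {1..L}" and x: "n\<^sub>0 \<le> real x" and xy: "x \<le> y"
  shows "q j x + (y - x) \<le> q j y"
proof -
  have one_step: "q j z + 1 \<le> q j (Suc z)" if z: "n\<^sub>0 \<le> real z" for z
  proof (cases "j = 1")
    case True
    then show ?thesis using C2 by simp
  next
    case False
    then have j2: "j \<in> {2..L}" using j by auto
    have "1 \<le> real z powr \<gamma>" using z n0 \<gamma> by (intro ge_one_powr_ge_zero) auto
    then show ?thesis using C3[OF j2 z] by simp
  qed
  show ?thesis
    using xy
  proof (induction y rule: dec_induct)
    case (step y)
    then show ?case using one_step[of y] x by (simp add: Suc_diff_le)
  qed simp
qed

lemma index_order:
  fixes q :: "nat \<Rightarrow> nat \<Rightarrow> nat" and \<gamma> n\<^sub>0 :: real and N :: nat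
  assumes growth: "\<And>j x y. j \<in> {1..L} \<Longrightarrow> n\<^sub>0 \<le> real x \<Longrightarrow> x \<le> y \<Longrightarrow> q j x + (y - x) \<le> q j y"
    and C4: "\<And>j n. j \<in> {1..<L} \<Longrightarrow> real n \<ge> n\<^sub>0 \<Longrightarrow>
               real (q (j + 1) (nat \<lfloor>real n powr (1 - \<gamma>)\<rfloor>)) \<ge> real (q j n) * real n powr \<gamma>"
    and \<gamma>: "0 < \<gamma>" "\<gamma> < 1" and n0: "n\<^sub>0 > 1"
    and start: "n\<^sub>0 \<le> real_of_int \<lfloor>real N powr (1 - \<gamma>)\<rfloor>"
    and i: "i \<in> {1..L}" and j: "Suc i \<le> j" "j \<le> L"
    and k: "nat \<lfloor>real N powr (1 - \<gamma>)\<rfloor> \<le> k" "k \<le> N" and k': "nat \<lfloor>real N powr (1 - \<gamma>)\<rfloor> \<le> k'"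
  shows "q i k \<le> q j k'"
proof -
  define s where "s = nat \<lfloor>real N powr (1 - \<gamma>)\<rfloor>"
  have s_real: "real s = real_of_int \<lfloor>real N powr (1 - \<gamma>)\<rfloor>" unfolding s_def using start n0 by simp
  have N1: "1 \<le> real N" using start n0 powr_le1[of "1 - \<gamma>" "real N"] \<gamma> by (cases "N = 0") auto
  have "real s \<le> real N powr (1 - \<gamma>)" unfolding s_real by simp
  also have "\<dots> \<le> real N" using N1 \<gamma> powr_mono[of "1 - \<gamma>" 1 "real N"] by simp
  finally have sN: "real s \<le> real N" .
  have s0: "n\<^sub>0 \<le> real s" using start s_real by simp
  have N0: "n\<^sub>0 \<le> real N" using s0 sN by linarith
  have jump: "q l N \<le> q (Suc l) k''" if l: "l \<in> {1..<L}" and k'': "s \<le> k''" for l k''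
  proof -
    have "real (q l N) * 1 \<le> real (q l N) * real N powr \<gamma>"
      using N1 \<gamma> by (intro mult_left_mono ge_one_powr_ge_zero) auto
    also have "\<dots> \<le> real (q (Suc l) s)" using C4[OF l N0] unfolding s_def by simp
    finally have "q l N \<le> q (Suc l) s" by simp
    also have "\<dots> \<le> q (Suc l) k''" using growth[of "Suc l" s k''] s0 k'' l by auto
    finally show ?thesis .
  qed
  have "\<forall>k''. s \<le> k'' \<longrightarrow> q i k \<le> q j k''"
    using j
  proof (induction j rule: nat_induct_at_least)
    case base
    have "q i k \<le> q i N" using growth[OF i, of k N] s0 k unfolding s_def by auto
    then show ?case using jump[of i] i base by (auto intro: order_trans)
  next
    case (Suc j)
    have "q i k \<le> q j N" using Suc.IH Suc.prems sN by auto
    then show ?case using jump[of j] i Suc.hyps Suc.prems by (auto intro: order_trans)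
  qed
  then show ?thesis using k' unfolding s_def by blast
qed

lemma idx_int[simp]: "ereal (real_of_int z) \<in> ext_int_idx" and idx_inf[simp]: "\<infinity> \<in> ext_int_idx" "-\<infinity> \<in> ext_int_idx"
  unfolding ext_int_idx_def by auto

lemma idx_Ints[simp]: "x \<in> \<int> \<Longrightarrow> ereal x \<in> ext_int_idx"
  by (auto elim: Ints_cases)

text \<open>A factor (j, t, c) stands for the centred observation X_j(t) - c.\<close>
type_synonym factor = "nat \<times> nat \<times> real"

locale mixing_setting =
  fixes M :: "'a measure" and L :: nat and X :: "nat \<Rightarrow> nat \<Rightarrow> 'a \<Rightarrow> real" and D :: real
    and F :: "ereal \<Rightarrow> ereal \<Rightarrow> 'a measure" and \<kappa> :: real
  assumes P: "prob_space M"
    and L_pos: "L \<ge> 1"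
    and stat: "\<And>j. j \<in> {1..L} \<Longrightarrow> stationary_proc M (X j)"
    and bdd: "\<And>j n. j \<in> {1..L} \<Longrightarrow> AE \<omega> in M. \<bar>X j n \<omega>\<bar> \<le> D"
    and subalg: "\<And>k l. k \<in> ext_int_idx \<Longrightarrow> l \<in> ext_int_idx \<Longrightarrow> k \<le> l \<Longrightarrow> subalgebra M (F k l)"
    and mono: "\<And>k l k' l'. k \<in> ext_int_idx \<Longrightarrow> l \<in> ext_int_idx \<Longrightarrow> k' \<in> ext_int_idx \<Longrightarrow> l' \<in> ext_int_idx
        \<Longrightarrow> k \<le> l \<Longrightarrow> k' \<le> k \<Longrightarrow> l \<le> l' \<Longrightarrow> sets (F k l) \<subseteq> sets (F k' l')"
    and \<kappa>_pos: "\<kappa> > 0"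
    and C1: "\<And>n. alpha_mix M F n + (MAX j\<in>{1..L}. beta_approx M F (X j) n) \<le> (1 / \<kappa>) * exp (- \<kappa> * real n)"
begin

sublocale prob_space M by (rule P)

definition mean :: "nat \<Rightarrow> real" where "mean j = expectation (X j 0)"

text \<open>Almost sure bound for a centred factor X_j(t) - c with |c| \<le> D (also at least 1).\<close>
definition factor_bound :: real where "factor_bound = 2 * (\<bar>D\<bar> + 1)"

definition mix_rate :: "nat \<Rightarrow> real" where "mix_rate n = (1 / \<kappa>) * exp (- \<kappa> * real n)"

definition window :: "nat \<Rightarrow> nat \<Rightarrow> 'a measure" where
  "window t s = F (ereal (real_of_int (int t - int s))) (ereal (real_of_int (int t + int s)))"

definition window_ce :: "nat \<Rightarrow> nat \<Rightarrow> nat \<Rightarrow> 'a \<Rightarrow> real" where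
  "window_ce j t s = real_cond_exp M (window t s) (X j t)"

lemma factor_bound_ge_1: "factor_bound \<ge> 1" and D_le_factor_bound: "\<bar>D\<bar> \<le> factor_bound"
  unfolding factor_bound_def by auto

lemma X_measurable[measurable]: "j \<in> {1..L} \<Longrightarrow> X j t \<in> borel_measurable M"
  using stat unfolding stationary_proc_def by blast

lemma D_nonneg: "D \<ge> 0"
proof -
  have "AE \<omega> in M. \<bar>X 1 0 \<omega>\<bar> \<le> D" using bdd[of 1 0] L_pos by auto
  then have "AE \<omega> in M. 0 \<le> D" by eventually_elim auto
  then show ?thesis by simp
qed

lemma X_integrable: "j \<in> {1..L} \<Longrightarrow> integrable M (X j t)"
  by (rule integrable_bounded[OF X_measurable bdd])

lemma expectation_X: assumes j: "j \<in> {1..L}" shows "expectation (X j t) = mean j"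
proof -
  let ?P = "Pi\<^sub>M UNIV (\<lambda>_::nat. borel :: real measure)"
  have eq: "distr M ?P (\<lambda>\<omega> n. X j (n + t) \<omega>) = distr M ?P (\<lambda>\<omega> n. X j n \<omega>)"
    using stat[OF j] unfolding stationary_proc_def by blast
  have m1: "(\<lambda>\<omega> n. X j (n + t) \<omega>) \<in> measurable M ?P"
    by (rule measurable_PiM_single') (use j in auto)
  have m2: "(\<lambda>\<omega> n. X j n \<omega>) \<in> measurable M ?P"
    by (rule measurable_PiM_single') (use j in auto)
  have "expectation (X j t) = integral\<^sup>L (distr M ?P (\<lambda>\<omega> n. X j (n + t) \<omega>)) (\<lambda>x. x 0)"
    by (subst integral_distr[OF m1]) auto
  also have "\<dots> = integral\<^sup>L (distr M ?P (\<lambda>\<omega> n. X j n \<omega>)) (\<lambda>x. x 0)" by (simp only: eq)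
  also have "\<dots> = mean j" unfolding mean_def by (subst integral_distr[OF m2]) auto
  finally show ?thesis .
qed

lemma mean_bound: assumes j: "j \<in> {1..L}" shows "\<bar>mean j\<bar> \<le> D"
  unfolding mean_def by (rule abs_expectation_le[OF X_measurable[OF j] bdd[OF j]])

lemma window_subalgebra: "subalgebra M (window t s)"
  unfolding window_def by (rule subalg[OF idx_int idx_int]) simp

lemma window_ce_measurable_window: "window_ce j t s \<in> borel_measurable (window t s)"
  unfolding window_ce_def by simp

lemma window_ce_measurable[measurable]: "window_ce j t s \<in> borel_measurable M"
  by (rule measurable_from_subalg[OF window_subalgebra window_ce_measurable_window])

lemma window_ce_bound: assumes j: "j \<in> {1..L}" shows "AE \<omega> in M. \<bar>window_ce j t s \<omega>\<bar> \<le> D"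
proof -
  interpret W: sigma_finite_subalgebra M "window t s"
    by (rule sigma_finite_subalgebra_of_subalgebra[OF window_subalgebra])
  have "AE \<omega> in M. window_ce j t s \<omega> \<le> D" unfolding window_ce_def
    by (rule W.real_cond_exp_le_c[OF X_integrable[OF j]]) (use bdd[OF j, of t] in auto)
  moreover have "AE \<omega> in M. window_ce j t s \<omega> \<ge> -D" unfolding window_ce_def
    by (rule W.real_cond_exp_ge_c[OF X_integrable[OF j]]) (use bdd[OF j, of t] in auto)
  ultimately show ?thesis by eventually_elim auto
qed

lemma window_ce_integrable: "j \<in> {1..L} \<Longrightarrow> integrable M (window_ce j t s)"
  by (rule integrable_bounded[OF window_ce_measurable window_ce_bound])

lemma alpha_mix_upper:
  assumes "A \<in> sets (F (-\<infinity>) (ereal (real_of_int (int k))))"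
    and "B \<in> sets (F (ereal (real_of_int (int k + int n))) \<infinity>)"
  shows "\<bar>prob (A \<inter> B) - prob A * prob B\<bar> \<le> alpha_mix M F n"
proof -
  have bdd_above: "bdd_above {\<bar>prob (A \<inter> B) - prob A * prob B\<bar> | k A B.
      (k::int) \<ge> 0 \<and> A \<in> sets (F (-\<infinity>) (ereal (real_of_int k)))
      \<and> B \<in> sets (F (ereal (real_of_int (k + int n))) \<infinity>)}"
  proof (rule bdd_aboveI[where M=1], clarify)
    fix k A B
    have "0 \<le> prob A * prob B" "prob A * prob B \<le> 1" by (auto intro: mult_le_one)
    then show "\<bar>prob (A \<inter> B) - prob A * prob B\<bar> \<le> 1"
      using measure_nonneg[of M "A \<inter> B"] prob_le_1[of "A \<inter> B"] by linarith
  qed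
  show ?thesis unfolding alpha_mix_def
    by (rule cSup_upper[OF _ bdd_above], rule CollectI, intro exI[of _ "int k"] exI[of _ A] exI[of _ B])
       (use assms in simp)
qed

lemma alpha_mix_nonneg: "0 \<le> alpha_mix M F n"
  using alpha_mix_upper[of "{}" 0 "{}" n] by simp

lemma beta_approx_upper: assumes j: "j \<in> {1..L}"
  shows "expectation (\<lambda>\<omega>. \<bar>X j t \<omega> - window_ce j t s \<omega>\<bar>) \<le> beta_approx M F (X j) s"
proof -
  have bd: "expectation (\<lambda>\<omega>. \<bar>X j m \<omega> - window_ce j m s \<omega>\<bar>) \<le> 2 * D" for m
  proof -
    have "expectation (\<lambda>\<omega>. \<bar>X j m \<omega> - window_ce j m s \<omega>\<bar>) \<le> expectation (\<lambda>\<omega>. 2 * D)"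
      by (rule integral_mono_AE')
         (use bdd[OF j, of m] window_ce_bound[OF j, of m s] D_nonneg in \<open>auto elim: AE_mp\<close>)
    then show ?thesis by (simp add: prob_space)
  qed
  have eq: "{expectation (\<lambda>\<omega>. \<bar>X j m \<omega> - real_cond_exp M (F (ereal (real_of_int (int m - int s)))
        (ereal (real_of_int (int m + int s)))) (X j m) \<omega>\<bar>) | m. True}
      = range (\<lambda>m. expectation (\<lambda>\<omega>. \<bar>X j m \<omega> - window_ce j m s \<omega>\<bar>))"
    unfolding window_ce_def window_def by blast
  show ?thesis unfolding beta_approx_def eq
    by (rule cSup_upper[OF rangeI]) (rule bdd_aboveI2[where M="2*D"], rule bd)
qed

lemma alpha_mix_le_rate: "alpha_mix M F n \<le> mix_rate n"
  and beta_approx_le_rate: "j \<in> {1..L} \<Longrightarrow> beta_approx M F (X j) n \<le> mix_rate n"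
proof -
  have beta_nonneg: "0 \<le> beta_approx M F (X j) n" if "j \<in> {1..L}" for j
    by (rule order_trans[OF _ beta_approx_upper[OF that, of 0 n]]) (rule integral_nonneg_AE, simp)
  have "0 \<le> (MAX j\<in>{1..L}. beta_approx M F (X j) n)"
    using L_pos by (intro order_trans[OF beta_nonneg[of 1]] Max_ge) auto
  then show "alpha_mix M F n \<le> mix_rate n" using C1[of n] unfolding mix_rate_def by linarith
  assume j: "j \<in> {1..L}"
  have "beta_approx M F (X j) n \<le> (MAX j\<in>{1..L}. beta_approx M F (X j) n)"
    using j by (intro Max_ge) auto
  then show "beta_approx M F (X j) n \<le> mix_rate n"
    using C1[of n] alpha_mix_nonneg[of n] unfolding mix_rate_def by linarith
qed

lemma window_ce_approx:
  "j \<in> {1..L} \<Longrightarrow> expectation (\<lambda>\<omega>. \<bar>X j t \<omega> - window_ce j t s \<omega>\<bar>) \<le> mix_rate s"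
  using beta_approx_upper beta_approx_le_rate order_trans by blast

lemma mix_rate_nonneg: "0 \<le> mix_rate n"
  unfolding mix_rate_def using \<kappa>_pos by simp

fun factor_val :: "factor \<Rightarrow> 'a \<Rightarrow> real" where
  "factor_val (j, t, c) \<omega> = X j t \<omega> - c"

fun factor_approx :: "nat \<Rightarrow> factor \<Rightarrow> 'a \<Rightarrow> real" where
  "factor_approx s (j, t, c) \<omega> = window_ce j t s \<omega> - c"

definition factor_prod :: "factor list \<Rightarrow> 'a \<Rightarrow> real" where
  "factor_prod fs \<omega> = (\<Prod>f\<leftarrow>fs. factor_val f \<omega>)"

definition approx_prod :: "nat \<Rightarrow> factor list \<Rightarrow> 'a \<Rightarrow> real" where
  "approx_prod s fs \<omega> = (\<Prod>f\<leftarrow>fs. factor_approx s f \<omega>)"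

definition admissible :: "factor list \<Rightarrow> bool" where
  "admissible fs \<longleftrightarrow> (\<forall>(j, t, c)\<in>set fs. j \<in> {1..L} \<and> \<bar>c\<bar> \<le> D)"

definition factor_times :: "factor list \<Rightarrow> nat set" where
  "factor_times fs = (\<lambda>(j, t, c). t) ` set fs"

lemma factor_prod_simps[simp]:
  "factor_prod [] \<omega> = 1" "factor_prod (f # fs) \<omega> = factor_val f \<omega> * factor_prod fs \<omega>"
  "factor_prod (fs @ gs) \<omega> = factor_prod fs \<omega> * factor_prod gs \<omega>"
  unfolding factor_prod_def by auto

lemma approx_prod_simps[simp]:
  "approx_prod s [] \<omega> = 1" "approx_prod s (f # fs) \<omega> = factor_approx s f \<omega> * approx_prod s fs \<omega>"
  "approx_prod s (fs @ gs) \<omega> = approx_prod s fs \<omega> * approx_prod s gs \<omega>"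
  unfolding approx_prod_def by auto

lemma admissible_simps[simp]:
  "admissible []" "admissible ((j, t, c) # fs) \<longleftrightarrow> j \<in> {1..L} \<and> \<bar>c\<bar> \<le> D \<and> admissible fs"
  "admissible (fs @ gs) \<longleftrightarrow> admissible fs \<and> admissible gs"
  unfolding admissible_def by (simp_all add: ball_Un)

lemma factor_times_simps[simp]:
  "factor_times [] = {}" "factor_times ((j, t, c) # fs) = insert t (factor_times fs)"
  "factor_times (fs @ gs) = factor_times fs \<union> factor_times gs"
  unfolding factor_times_def by (simp_all add: image_Un)

lemma centred_le_factor_bound: "\<bar>x\<bar> \<le> D \<Longrightarrow> \<bar>c\<bar> \<le> D \<Longrightarrow> \<bar>x - c\<bar> \<le> factor_bound"
  unfolding factor_bound_def abs_le_iff using abs_ge_self[of D] by auto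

lemma factor_prod_measurable[measurable]: "admissible fs \<Longrightarrow> factor_prod fs \<in> borel_measurable M"
proof (induction fs)
  case (Cons f fs)
  obtain j t c where f: "f = (j, t, c)" by (cases f)
  have "factor_prod (f # fs) = (\<lambda>\<omega>. (X j t \<omega> - c) * factor_prod fs \<omega>)" by (auto simp: f)
  then show ?case using Cons by (simp add: f)
next
  case Nil
  have "factor_prod [] = (\<lambda>_. 1)" by (rule ext) simp
  then show ?case by simp
qed

lemma approx_prod_measurable[measurable]: "approx_prod s fs \<in> borel_measurable M"
proof (induction fs)
  case (Cons f fs)
  obtain j t c where f: "f = (j, t, c)" by (cases f)
  have "approx_prod s (f # fs) = (\<lambda>\<omega>. (window_ce j t s \<omega> - c) * approx_prod s fs \<omega>)" by (auto simp: f)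
  then show ?case using Cons by simp
next
  case Nil
  have "approx_prod s [] = (\<lambda>_. 1)" by (rule ext) simp
  then show ?case by simp
qed

lemma factor_prod_bound: "admissible fs \<Longrightarrow> AE \<omega> in M. \<bar>factor_prod fs \<omega>\<bar> \<le> factor_bound ^ length fs"
proof (induction fs)
  case (Cons f fs)
  obtain j t c where f: "f = (j, t, c)" by (cases f)
  have j: "j \<in> {1..L}" and c: "\<bar>c\<bar> \<le> D" and fs: "admissible fs" using Cons.prems by (auto simp: f)
  show ?case using Cons.IH[OF fs] bdd[OF j, of t]
  proof eventually_elim
    case (elim \<omega>)
    have "\<bar>X j t \<omega> - c\<bar> \<le> factor_bound" using elim(2) c by (rule centred_le_factor_bound)
    then show ?case using elim factor_bound_ge_1 by (simp add: f abs_mult mult_mono)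
  qed
qed simp

lemma approx_prod_bound: "admissible fs \<Longrightarrow> AE \<omega> in M. \<bar>approx_prod s fs \<omega>\<bar> \<le> factor_bound ^ length fs"
proof (induction fs)
  case (Cons f fs)
  obtain j t c where f: "f = (j, t, c)" by (cases f)
  have j: "j \<in> {1..L}" and c: "\<bar>c\<bar> \<le> D" and fs: "admissible fs" using Cons.prems by (auto simp: f)
  show ?case using Cons.IH[OF fs] window_ce_bound[OF j, of t s]
  proof eventually_elim
    case (elim \<omega>)
    have "\<bar>window_ce j t s \<omega> - c\<bar> \<le> factor_bound" using elim(2) c by (rule centred_le_factor_bound)
    then show ?case using elim factor_bound_ge_1 by (simp add: f abs_mult mult_mono)
  qed
qed simp

lemma factor_prod_integrable: "admissible fs \<Longrightarrow> integrable M (factor_prod fs)"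
  by (rule integrable_bounded[OF factor_prod_measurable factor_prod_bound])

lemma approx_prod_integrable: "admissible fs \<Longrightarrow> integrable M (approx_prod s fs)"
  by (rule integrable_bounded[OF approx_prod_measurable approx_prod_bound])

text \<open>Replacing every factor by its window approximation costs at most mix_rate s per factor
  in L1 (telescoping over the factors).\<close>
lemma factor_prod_approx:
  "admissible fs \<Longrightarrow> expectation (\<lambda>\<omega>. \<bar>factor_prod fs \<omega> - approx_prod s fs \<omega>\<bar>)
    \<le> length fs * factor_bound ^ length fs * mix_rate s"
proof (induction fs)
  case (Cons f fs)
  obtain j t c where f: "f = (j, t, c)" by (cases f)
  have j: "j \<in> {1..L}" and c: "\<bar>c\<bar> \<le> D" and fs: "admissible fs" using Cons.prems by (auto simp: f)
  let ?n = "length fs" and ?B = factor_bound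
  let ?e1 = "\<lambda>\<omega>. \<bar>X j t \<omega> - window_ce j t s \<omega>\<bar>" and ?e2 = "\<lambda>\<omega>. \<bar>factor_prod fs \<omega> - approx_prod s fs \<omega>\<bar>"
  have B0: "0 \<le> ?B" using factor_bound_ge_1 by simp
  have i1: "integrable M ?e1" using X_integrable[OF j] window_ce_integrable[OF j] by (intro integrable_abs Bochner_Integration.integrable_diff) auto
  have i2: "integrable M ?e2"
    using factor_prod_integrable[OF fs] approx_prod_integrable[OF fs] by (intro integrable_abs Bochner_Integration.integrable_diff)
  have "expectation (\<lambda>\<omega>. \<bar>factor_prod (f # fs) \<omega> - approx_prod s (f # fs) \<omega>\<bar>)
      \<le> expectation (\<lambda>\<omega>. ?B ^ ?n * ?e1 \<omega> + ?B * ?e2 \<omega>)"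
  proof (rule integral_mono_AE')
    show "AE \<omega> in M. \<bar>factor_prod (f # fs) \<omega> - approx_prod s (f # fs) \<omega>\<bar> \<le> ?B ^ ?n * ?e1 \<omega> + ?B * ?e2 \<omega>"
      using factor_prod_bound[OF fs] window_ce_bound[OF j, of t s]
    proof eventually_elim
      case (elim \<omega>)
      have x': "\<bar>window_ce j t s \<omega> - c\<bar> \<le> ?B" using elim(2) c by (rule centred_le_factor_bound)
      have "\<bar>factor_prod (f # fs) \<omega> - approx_prod s (f # fs) \<omega>\<bar>
          \<le> \<bar>(X j t \<omega> - c) - (window_ce j t s \<omega> - c)\<bar> * \<bar>factor_prod fs \<omega>\<bar>
            + \<bar>window_ce j t s \<omega> - c\<bar> * ?e2 \<omega>"
        unfolding f by (simp only: factor_prod_simps approx_prod_simps factor_val.simps factor_approx.simps abs_mult_diff_le)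
      also have "\<dots> \<le> ?e1 \<omega> * ?B ^ ?n + ?B * ?e2 \<omega>"
        using elim(1) x' by (intro add_mono mult_mono) auto
      finally show ?case by (simp add: mult.commute)
    qed
  qed (use i1 i2 B0 in auto)
  also have "\<dots> = ?B ^ ?n * expectation ?e1 + ?B * expectation ?e2" using i1 i2 by simp
  also have "\<dots> \<le> ?B ^ ?n * mix_rate s + ?B * (?n * ?B ^ ?n * mix_rate s)"
    using window_ce_approx[OF j] Cons.IH[OF fs] B0 by (intro add_mono mult_left_mono) auto
  also have "\<dots> \<le> length (f # fs) * ?B ^ length (f # fs) * mix_rate s"
  proof -
    have "?B ^ ?n * mix_rate s \<le> ?B ^ Suc ?n * mix_rate s"
      using factor_bound_ge_1 mix_rate_nonneg by (intro mult_right_mono power_increasing) auto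
    then show ?thesis by (simp add: algebra_simps)
  qed
  finally show ?case .
qed simp

lemma approx_prod_measurable_in:
  assumes sG: "space G = space M" and win: "\<And>t. t \<in> factor_times fs \<Longrightarrow> sets (window t s) \<subseteq> sets G"
  shows "approx_prod s fs \<in> borel_measurable G"
  using win
proof (induction fs)
  case Nil
  have "approx_prod s [] = (\<lambda>_. 1)" by (rule ext) simp
  then show ?case by simp
next
  case (Cons f fs)
  obtain j t c where f: "f = (j, t, c)" by (cases f)
  have "subalgebra G (window t s)"
    using Cons.prems[of t] window_subalgebra sG by (auto simp: f subalgebra_def)
  then have "window_ce j t s \<in> borel_measurable G"
    by (rule measurable_from_subalg) (rule window_ce_measurable_window)
  moreover have "approx_prod s fs \<in> borel_measurable G" using Cons by (simp add: f)
  moreover have "approx_prod s (f # fs) = (\<lambda>\<omega>. (window_ce j t s \<omega> - c) * approx_prod s fs \<omega>)"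
    by (auto simp: f)
  ultimately show ?case by simp
qed

lemma expectation_approx_error:
  "admissible fs \<Longrightarrow> \<bar>expectation (factor_prod fs) - expectation (approx_prod s fs)\<bar>
    \<le> length fs * factor_bound ^ length fs * mix_rate s"
  using abs_expectation_diff_le[OF factor_prod_integrable approx_prod_integrable] factor_prod_approx
  by (rule order_trans)

text \<open>Window approximations of factors before time T and after time T + 3s are measurable
  w.r.t. the past up to T + s and the future from T + 2s, so alpha-mixing controls their
  covariance.\<close>
lemma approx_prod_covariance:
  assumes fs: "admissible fs" and gs: "admissible gs"
    and past: "factor_times fs \<subseteq> {..T}" and future: "factor_times gs \<subseteq> {T + 3 * s..}"
  shows "\<bar>expectation (\<lambda>\<omega>. approx_prod s fs \<omega> * approx_prod s gs \<omega>)
      - expectation (approx_prod s fs) * expectation (approx_prod s gs)\<bar>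
    \<le> 4 * factor_bound ^ (length fs + length gs) * mix_rate s"
proof -
  define G where "G = F (-\<infinity>) (ereal (real_of_int (int (T + s))))"
  define H where "H = F (ereal (real_of_int (int (T + s) + int s))) \<infinity>"
  have sG: "subalgebra M G" unfolding G_def by (rule subalg[OF idx_inf(2) idx_int]) simp
  have sH: "subalgebra M H" unfolding H_def by (rule subalg[OF idx_int idx_inf(1)]) simp
  have winG: "sets (window t s) \<subseteq> sets G" if "t \<in> factor_times fs" for t
    using past that unfolding window_def G_def by (intro mono) auto
  have winH: "sets (window t s) \<subseteq> sets H" if "t \<in> factor_times gs" for t
    using future that unfolding window_def H_def by (intro mono) auto
  have B0: "0 \<le> factor_bound" using factor_bound_ge_1 by simp
  have "\<bar>expectation (\<lambda>\<omega>. approx_prod s fs \<omega> * approx_prod s gs \<omega>)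
      - expectation (approx_prod s fs) * expectation (approx_prod s gs)\<bar>
    \<le> 4 * factor_bound ^ length fs * factor_bound ^ length gs * alpha_mix M F s"
  proof (rule mixing_covariance_bound[OF sG sH])
    show "approx_prod s fs \<in> borel_measurable G"
      using sG winG by (intro approx_prod_measurable_in) (auto simp: subalgebra_def)
    show "approx_prod s gs \<in> borel_measurable H"
      using sH winH by (intro approx_prod_measurable_in) (auto simp: subalgebra_def)
    show "\<bar>prob (A \<inter> B) - prob A * prob B\<bar> \<le> alpha_mix M F s" if "A \<in> sets G" "B \<in> sets H" for A B
      using alpha_mix_upper[of A "T + s" B s] that unfolding G_def H_def by simp
  qed (auto simp: B0 intro: approx_prod_bound fs gs)
  also have "\<dots> \<le> 4 * factor_bound ^ (length fs + length gs) * mix_rate s"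
    using alpha_mix_le_rate[of s] B0 by (simp add: power_add mult.assoc mult_left_mono)
  finally show ?thesis .
qed

text \<open>Covariance inequality for products of admissible factors separated by a time gap d:
  pass to window approximations of radius d div 3, use mixing, and pay the approximation error
  on each of the three expectations.\<close>
lemma factor_prod_covariance:
  assumes fs: "admissible fs" and gs: "admissible gs"
    and past: "factor_times fs \<subseteq> {..T}" and future: "factor_times gs \<subseteq> {T + d..}"
  shows "\<bar>expectation (\<lambda>\<omega>. factor_prod fs \<omega> * factor_prod gs \<omega>)
      - expectation (factor_prod fs) * expectation (factor_prod gs)\<bar>
    \<le> (2 * (length fs + length gs) + 4) * factor_bound ^ (length fs + length gs) * mix_rate (d div 3)"
proof -
  define s where "s = d div 3"
  let ?nf = "length fs" and ?ng = "length gs" and ?B = factor_bound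
  let ?n = "?nf + ?ng" and ?e = "mix_rate s"
  have future': "factor_times gs \<subseteq> {T + 3 * s..}" using future unfolding s_def by auto
  have B0: "0 \<le> ?B" using factor_bound_ge_1 by simp
  have "\<bar>expectation (factor_prod (fs @ gs)) - expectation (approx_prod s (fs @ gs))\<bar> \<le> ?n * ?B ^ ?n * ?e"
    using expectation_approx_error[of "fs @ gs" s] fs gs by simp
  moreover have "factor_prod (fs @ gs) = (\<lambda>\<omega>. factor_prod fs \<omega> * factor_prod gs \<omega>)"
    and "approx_prod s (fs @ gs) = (\<lambda>\<omega>. approx_prod s fs \<omega> * approx_prod s gs \<omega>)" by auto
  ultimately have joint: "\<bar>expectation (\<lambda>\<omega>. factor_prod fs \<omega> * factor_prod gs \<omega>)
      - expectation (\<lambda>\<omega>. approx_prod s fs \<omega> * approx_prod s gs \<omega>)\<bar> \<le> ?n * ?B ^ ?n * ?e"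
    by simp
  have marginals: "\<bar>expectation (factor_prod fs) * expectation (factor_prod gs)
      - expectation (approx_prod s fs) * expectation (approx_prod s gs)\<bar> \<le> ?n * ?B ^ ?n * ?e"
  proof -
    have "\<bar>expectation (factor_prod fs) * expectation (factor_prod gs)
        - expectation (approx_prod s fs) * expectation (approx_prod s gs)\<bar>
      \<le> \<bar>expectation (factor_prod fs) - expectation (approx_prod s fs)\<bar> * \<bar>expectation (factor_prod gs)\<bar>
        + \<bar>expectation (approx_prod s fs)\<bar> * \<bar>expectation (factor_prod gs) - expectation (approx_prod s gs)\<bar>"
      by (rule abs_mult_diff_le)
    also have "\<dots> \<le> (?nf * ?B ^ ?nf * ?e) * ?B ^ ?ng + ?B ^ ?nf * (?ng * ?B ^ ?ng * ?e)"
      using expectation_approx_error[OF fs, of s] expectation_approx_error[OF gs, of s]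
        abs_expectation_le[OF factor_prod_measurable[OF gs] factor_prod_bound[OF gs]]
        abs_expectation_le[OF approx_prod_measurable approx_prod_bound[OF fs, of s]]
      by (intro add_mono mult_mono) (auto simp: B0 mix_rate_nonneg)
    also have "\<dots> = ?n * ?B ^ ?n * ?e" by (simp add: algebra_simps power_add)
    finally show ?thesis .
  qed
  have "\<bar>expectation (\<lambda>\<omega>. factor_prod fs \<omega> * factor_prod gs \<omega>)
      - expectation (factor_prod fs) * expectation (factor_prod gs)\<bar>
    \<le> ?n * ?B ^ ?n * ?e + 4 * ?B ^ ?n * ?e + ?n * ?B ^ ?n * ?e"
    using joint marginals approx_prod_covariance[OF fs gs past future'] by linarith
  also have "\<dots> = (2 * ?n + 4) * ?B ^ ?n * mix_rate (d div 3)"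
    unfolding s_def by (simp add: algebra_simps)
  finally show ?thesis .
qed

text \<open>Fourth moments of block sums involve at most four blocks of at most L + 1 factors.\<close>
definition max_factors :: nat where "max_factors = 4 * (L + 1)"

definition cov_const :: real where "cov_const = (2 * max_factors + 4) * factor_bound ^ max_factors"

lemma cov_const_nonneg: "0 \<le> cov_const"
  unfolding cov_const_def using factor_bound_ge_1 by simp

lemma factor_prod_covariance_uniform:
  assumes "admissible fs" "admissible gs" "factor_times fs \<subseteq> {..T}" "factor_times gs \<subseteq> {T + d..}"
    and "length fs + length gs \<le> max_factors"
  shows "\<bar>expectation (\<lambda>\<omega>. factor_prod fs \<omega> * factor_prod gs \<omega>)
      - expectation (factor_prod fs) * expectation (factor_prod gs)\<bar> \<le> cov_const * mix_rate (d div 3)"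
proof -
  have "real (2 * (length fs + length gs) + 4) * factor_bound ^ (length fs + length gs) \<le> cov_const"
    unfolding cov_const_def using factor_bound_ge_1 assms(5) by (intro mult_mono power_increasing) auto
  from mult_right_mono[OF this mix_rate_nonneg[of "d div 3"]] show ?thesis
    using factor_prod_covariance[OF assms(1-4)] by linarith
qed

lemma centred_lead_moment:
  assumes i: "i \<in> {1..L}" and rest: "admissible rest" "factor_times rest \<subseteq> {t + d..}"
    and len: "length rest + 1 \<le> max_factors"
  shows "\<bar>expectation (\<lambda>\<omega>. factor_prod [(i, t, mean i)] \<omega> * factor_prod rest \<omega>)\<bar>
    \<le> cov_const * mix_rate (d div 3)"
proof -
  have "factor_prod [(i, t, mean i)] = (\<lambda>\<omega>. X i t \<omega> - mean i)" by auto
  then have "expectation (factor_prod [(i, t, mean i)]) = 0"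
    using expectation_X[OF i, of t] X_integrable[OF i, of t] by (simp add: prob_space)
  then show ?thesis
    using factor_prod_covariance_uniform[of "[(i, t, mean i)]" rest t d] i mean_bound[OF i] rest len by simp
qed

text \<open>The rate at distance d div 3 decays geometrically with ratio rho^2 in d.\<close>
definition rho :: real where "rho = exp (- \<kappa> / 6)"

lemma rho_bounds: "0 \<le> rho" "rho < 1"
  unfolding rho_def using \<kappa>_pos by auto

lemma mix_rate_div3_le: "mix_rate (d div 3) \<le> (exp \<kappa> / \<kappa>) * rho ^ (2 * d)"
proof -
  have "\<kappa> * real d \<le> 3 * (\<kappa> * real (d div 3)) + 2 * \<kappa>"
    using mult_left_mono[of "real d" "3 * real (d div 3) + 2" \<kappa>] \<kappa>_pos by (simp add: algebra_simps)
  then have exponent: "- \<kappa> * real (d div 3) \<le> \<kappa> + (- (\<kappa> * real d) / 3)" using \<kappa>_pos by linarith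
  have rho_power: "rho ^ (2 * d) = exp (- (\<kappa> * real d) / 3)"
    unfolding rho_def by (simp flip: exp_of_nat_mult)
  have "mix_rate (d div 3) \<le> (1 / \<kappa>) * exp (\<kappa> + (- (\<kappa> * real d) / 3))"
    unfolding mix_rate_def using exponent \<kappa>_pos by (intro mult_left_mono) auto
  also have "\<dots> = (exp \<kappa> / \<kappa>) * rho ^ (2 * d)"
    unfolding rho_power exp_add by simp
  finally show ?thesis .
qed

lemma min_rho_power_le: "min (rho ^ (2 * x)) (rho ^ (2 * y)) \<le> rho ^ (x + y)"
proof (cases "x \<le> y")
  case True
  then have "rho ^ (2 * y) \<le> rho ^ (x + y)" using rho_bounds by (intro power_decreasing) auto
  then show ?thesis by simp
next
  case False
  then have "rho ^ (2 * x) \<le> rho ^ (x + y)" using rho_bounds by (intro power_decreasing) auto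
  then show ?thesis by simp
qed

definition tuple_const :: real where "tuple_const = cov_const * (1 + factor_bound ^ 2) * (exp \<kappa> / \<kappa>)"

definition fourth_const :: real where "fourth_const = 512 * tuple_const * (1 / (1 - rho)) ^ 2"

lemma tuple_const_nonneg: "0 \<le> tuple_const"
  unfolding tuple_const_def using cov_const_nonneg \<kappa>_pos by simp

lemma fourth_const_nonneg: "0 \<le> fourth_const"
  unfolding fourth_const_def using tuple_const_nonneg rho_bounds by simp

end

text \<open>A block sum: the terms Z_k = (X_i(lead k) - mean i) * (product of the tail factors of k),
  k \<in> {u..v}, where lead times grow at least linearly and all tail factors occur after all lead
  times.\<close>
locale centred_block = mixing_setting +
  fixes i :: nat and lead :: "nat \<Rightarrow> nat" and tail :: "nat \<Rightarrow> factor list" and u v :: nat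
  assumes i: "i \<in> {1..L}"
    and tail_admissible: "\<And>k. k \<in> {u..v} \<Longrightarrow> admissible (tail k)"
    and tail_length: "\<And>k. k \<in> {u..v} \<Longrightarrow> length (tail k) \<le> L"
    and lead_growth: "\<And>k k'. k \<in> {u..v} \<Longrightarrow> k' \<in> {u..v} \<Longrightarrow> k \<le> k' \<Longrightarrow> lead k + (k' - k) \<le> lead k'"
    and tail_late: "\<And>k k'. k \<in> {u..v} \<Longrightarrow> k' \<in> {u..v} \<Longrightarrow> factor_times (tail k') \<subseteq> {lead k..}"
begin

definition lead_factor :: "nat \<Rightarrow> factor" where "lead_factor k = (i, lead k, mean i)"

definition block :: "nat \<Rightarrow> factor list" where "block k = lead_factor k # tail k"

definition tuple_prod :: "nat list \<Rightarrow> 'a \<Rightarrow> real" where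
  "tuple_prod ks = factor_prod (concat (map block ks))"

lemma block_admissible: "k \<in> {u..v} \<Longrightarrow> admissible (block k)"
  unfolding block_def lead_factor_def using i mean_bound[OF i] tail_admissible by simp

lemma block_length: "k \<in> {u..v} \<Longrightarrow> length (block k) \<le> L + 1"
  unfolding block_def using tail_length by simp

lemma lead_mono: "k \<in> {u..v} \<Longrightarrow> k' \<in> {u..v} \<Longrightarrow> k \<le> k' \<Longrightarrow> lead k \<le> lead k'"
  using lead_growth by fastforce

lemma block_late: "k \<in> {u..v} \<Longrightarrow> k' \<in> {u..v} \<Longrightarrow> k \<le> k' \<Longrightarrow> factor_times (block k') \<subseteq> {lead k..}"
  unfolding block_def lead_factor_def using tail_late lead_mono by simp

lemma tuple_prod_as_prod: "tuple_prod ks \<omega> = (\<Prod>k\<leftarrow>ks. factor_prod (block k) \<omega>)"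
  unfolding tuple_prod_def by (induction ks) auto

lemma tuple_prod_integrable: "set ks \<subseteq> {u..v} \<Longrightarrow> integrable M (tuple_prod ks)"
  unfolding tuple_prod_def by (rule factor_prod_integrable) (induction ks, auto simp: block_admissible)

lemma tuple_prod_sort: "tuple_prod (sort ks) = tuple_prod ks"
proof
  fix \<omega>
  have "tuple_prod (sort ks) \<omega> = prod_mset (image_mset (\<lambda>k. factor_prod (block k) \<omega>) (mset (sort ks)))"
    unfolding tuple_prod_as_prod by (simp flip: prod_mset_prod_list)
  also have "\<dots> = tuple_prod ks \<omega>"
    unfolding tuple_prod_as_prod by (simp flip: prod_mset_prod_list)
  finally show "tuple_prod (sort ks) \<omega> = tuple_prod ks \<omega>" .
qed

text \<open>First gap of a sorted 4-tuple: the lead factor of k1 against everything else.\<close>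
lemma tuple_moment_first_gap:
  assumes k: "k1 \<in> {u..v}" "k2 \<in> {u..v}" "k3 \<in> {u..v}" "k4 \<in> {u..v}" and o: "k1 \<le> k2" "k2 \<le> k3" "k3 \<le> k4"
  shows "\<bar>expectation (tuple_prod [k1, k2, k3, k4])\<bar> \<le> cov_const * mix_rate ((k2 - k1) div 3)"
proof -
  let ?rest = "tail k1 @ block k2 @ block k3 @ block k4"
  have split: "tuple_prod [k1, k2, k3, k4] = (\<lambda>\<omega>. factor_prod [(i, lead k1, mean i)] \<omega> * factor_prod ?rest \<omega>)"
    unfolding tuple_prod_def block_def lead_factor_def by (rule ext) simp
  have times: "factor_times ?rest \<subseteq> {lead k1 + (k2 - k1)..}"
    using tail_late[OF k(2) k(1)] block_late[OF k(2) k(2)] block_late[OF k(2) k(3)] block_late[OF k(2) k(4)]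
      lead_growth[OF k(1,2) o(1)] o by fastforce
  have adm: "admissible ?rest" using tail_admissible block_admissible k by simp
  have len: "length ?rest + 1 \<le> max_factors"
    using block_length[OF k(2)] block_length[OF k(3)] block_length[OF k(4)] tail_length[OF k(1)]
    unfolding max_factors_def by simp
  show ?thesis unfolding split by (rule centred_lead_moment[OF i adm times len])
qed

text \<open>Later gaps of a sorted 4-tuple: split after k2, then split the future part after k3.\<close>
lemma tuple_moment_later_gaps:
  assumes k: "k1 \<in> {u..v}" "k2 \<in> {u..v}" "k3 \<in> {u..v}" "k4 \<in> {u..v}" and o: "k1 \<le> k2" "k2 \<le> k3" "k3 \<le> k4"
  shows "\<bar>expectation (tuple_prod [k1, k2, k3, k4])\<bar>
    \<le> cov_const * mix_rate ((k3 - k2) div 3) + factor_bound ^ 2 * (cov_const * mix_rate ((k4 - k3) div 3))"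
proof -
  let ?past = "[lead_factor k1, lead_factor k2]"
  let ?fut = "tail k1 @ tail k2 @ block k3 @ block k4"
  let ?rest = "tail k1 @ tail k2 @ tail k3 @ block k4"
  have lens: "length (block k3) \<le> L + 1" "length (block k4) \<le> L + 1" "length (tail k1) \<le> L"
    "length (tail k2) \<le> L" "length (tail k3) \<le> L"
    using block_length tail_length k by auto
  have past: "admissible ?past" "factor_times ?past \<subseteq> {..lead k2}"
    using lead_mono[OF k(1,2) o(1)] i mean_bound[OF i] by (auto simp: lead_factor_def)
  have fut: "admissible ?fut" "factor_times ?fut \<subseteq> {lead k2 + (k3 - k2)..}"
    using tail_admissible block_admissible k apply simp
    using tail_late[OF k(3) k(1)] tail_late[OF k(3) k(2)] block_late[OF k(3) k(3)] block_late[OF k(3) k(4)]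
      lead_growth[OF k(2,3) o(2)] o by fastforce
  have rest: "admissible ?rest" "factor_times ?rest \<subseteq> {lead k3 + (k4 - k3)..}"
    using tail_admissible block_admissible k apply simp
    using tail_late[OF k(4) k(1)] tail_late[OF k(4) k(2)] tail_late[OF k(4) k(3)] block_late[OF k(4) k(4)]
      lead_growth[OF k(3,4) o(3)] o by fastforce
  have split_past: "tuple_prod [k1, k2, k3, k4] = (\<lambda>\<omega>. factor_prod ?past \<omega> * factor_prod ?fut \<omega>)"
    unfolding tuple_prod_def block_def by (rule ext) (simp add: mult_ac)
  have split_fut: "factor_prod ?fut = (\<lambda>\<omega>. factor_prod [(i, lead k3, mean i)] \<omega> * factor_prod ?rest \<omega>)"
    unfolding block_def lead_factor_def by (rule ext) (simp add: mult_ac)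
  have cov: "\<bar>expectation (tuple_prod [k1, k2, k3, k4]) - expectation (factor_prod ?past) * expectation (factor_prod ?fut)\<bar>
      \<le> cov_const * mix_rate ((k3 - k2) div 3)"
    unfolding split_past
    by (intro factor_prod_covariance_uniform[OF past(1) fut(1) past(2) fut(2)]) (use lens in \<open>simp add: max_factors_def\<close>)
  have "\<bar>expectation (factor_prod ?past)\<bar> \<le> factor_bound ^ 2"
    using abs_expectation_le[OF factor_prod_measurable[OF past(1)] factor_prod_bound[OF past(1)]]
    by (simp add: power2_eq_square del: factor_prod_simps)
  moreover have "\<bar>expectation (factor_prod ?fut)\<bar> \<le> cov_const * mix_rate ((k4 - k3) div 3)"
    unfolding split_fut by (intro centred_lead_moment[OF i rest]) (use lens in \<open>simp add: max_factors_def\<close>)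
  ultimately have "\<bar>expectation (factor_prod ?past) * expectation (factor_prod ?fut)\<bar>
      \<le> factor_bound ^ 2 * (cov_const * mix_rate ((k4 - k3) div 3))"
    unfolding abs_mult by (intro mult_mono) auto
  then show ?thesis using cov by linarith
qed

lemma sorted_tuple_moment:
  assumes k: "k1 \<in> {u..v}" "k2 \<in> {u..v}" "k3 \<in> {u..v}" "k4 \<in> {u..v}" and o: "k1 \<le> k2" "k2 \<le> k3" "k3 \<le> k4"
  shows "\<bar>expectation (tuple_prod [k1, k2, k3, k4])\<bar>
    \<le> tuple_const * (rho ^ ((k2 - k1) + (k3 - k2)) + rho ^ ((k2 - k1) + (k4 - k3)))"
proof -
  define e1 e2 e3 where "e1 = mix_rate ((k2 - k1) div 3)" and "e2 = mix_rate ((k3 - k2) div 3)"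
    and "e3 = mix_rate ((k4 - k3) div 3)"
  define K where "K = cov_const * (1 + factor_bound ^ 2)"
  define c where "c = exp \<kappa> / \<kappa>"
  have e0: "0 \<le> e1" "0 \<le> e2" "0 \<le> e3" unfolding e1_def e2_def e3_def by (auto intro: mix_rate_nonneg)
  have K0: "0 \<le> K" unfolding K_def using cov_const_nonneg by simp
  have first: "\<bar>expectation (tuple_prod [k1, k2, k3, k4])\<bar> \<le> K * e1"
    using tuple_moment_first_gap[OF k o] mult_right_mono[OF _ e0(1), of cov_const K] cov_const_nonneg
    unfolding e1_def K_def by (simp add: algebra_simps)
  have later: "\<bar>expectation (tuple_prod [k1, k2, k3, k4])\<bar> \<le> K * (e2 + e3)"
    using tuple_moment_later_gaps[OF k o] mult_right_mono[OF _ e0(2), of cov_const K]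
      mult_right_mono[OF _ e0(3), of "factor_bound ^ 2 * cov_const" K] cov_const_nonneg
    unfolding e2_def e3_def K_def by (simp add: algebra_simps)
  have both: "\<bar>expectation (tuple_prod [k1, k2, k3, k4])\<bar> \<le> K * (min e1 e2 + min e1 e3)"
  proof (cases "e1 \<le> e2 \<or> e1 \<le> e3")
    case True
    then have "K * e1 \<le> K * (min e1 e2 + min e1 e3)" using e0 K0 by (intro mult_left_mono) auto
    then show ?thesis using first by linarith
  next
    case False
    then show ?thesis using later by simp
  qed
  have min_le: "min (mix_rate (x div 3)) (mix_rate (y div 3)) \<le> c * rho ^ (x + y)" for x y
  proof -
    have c0: "0 \<le> c" unfolding c_def using \<kappa>_pos by simp
    have "min (mix_rate (x div 3)) (mix_rate (y div 3)) \<le> min (c * rho ^ (2 * x)) (c * rho ^ (2 * y))"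
      using mix_rate_div3_le[of x] mix_rate_div3_le[of y] unfolding c_def by linarith
    also have "\<dots> = c * min (rho ^ (2 * x)) (rho ^ (2 * y))" using c0 by (simp add: min_mult_distrib_left)
    also have "\<dots> \<le> c * rho ^ (x + y)" using c0 min_rho_power_le by (intro mult_left_mono) auto
    finally show ?thesis .
  qed
  have "K * (min e1 e2 + min e1 e3) \<le> K * (c * rho ^ ((k2 - k1) + (k3 - k2)) + c * rho ^ ((k2 - k1) + (k4 - k3)))"
    unfolding e1_def e2_def e3_def using K0 min_le by (intro mult_left_mono add_mono) auto
  also have "\<dots> = tuple_const * (rho ^ ((k2 - k1) + (k3 - k2)) + rho ^ ((k2 - k1) + (k4 - k3)))"
    unfolding tuple_const_def K_def c_def using \<kappa>_pos by (simp add: field_simps)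
  finally show ?thesis using both by linarith
qed

lemma tuple_moment_geo_weight:
  assumes k: "k1 \<in> {u..v}" "k2 \<in> {u..v}" "k3 \<in> {u..v}" "k4 \<in> {u..v}"
  shows "(if sorted [k1, k2, k3, k4] then \<bar>expectation (tuple_prod [k1, k2, k3, k4])\<bar> else 0)
    \<le> tuple_const * (geo_weight rho k1 k2 * geo_weight rho k2 k3)
      + tuple_const * (geo_weight rho k1 k2 * geo_weight rho k3 k4)"
proof (cases "sorted [k1, k2, k3, k4]")
  case True
  then have o: "k1 \<le> k2" "k2 \<le> k3" "k3 \<le> k4" by auto
  show ?thesis
    using sorted_tuple_moment[OF k o] True o by (simp add: geo_weight_def distrib_left flip: power_add)
next
  case False
  have "0 \<le> tuple_const * (geo_weight rho k1 k2 * geo_weight rho k2 k3)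
      + tuple_const * (geo_weight rho k1 k2 * geo_weight rho k3 k4)"
    using geo_weight_nonneg[OF rho_bounds(1)] tuple_const_nonneg by simp
  then show ?thesis using False by (simp only: if_False)
qed

lemma fourth_moment_sorted_expansion:
  "expectation (\<lambda>\<omega>. (\<Sum>k\<in>{u..v}. factor_prod (block k) \<omega>) ^ 4)
    \<le> 256 * (\<Sum>k1\<in>{u..v}. \<Sum>k2\<in>{u..v}. \<Sum>k3\<in>{u..v}. \<Sum>k4\<in>{u..v}.
         if sorted [k1, k2, k3, k4] then \<bar>expectation (tuple_prod [k1, k2, k3, k4])\<bar> else 0)"
proof -
  let ?K = "{u..v}"
  let ?A = "lists_of_length ?K 4"
  define g where "g ks = \<bar>expectation (tuple_prod ks)\<bar>" for ks
  have "expectation (\<lambda>\<omega>. (\<Sum>k\<in>?K. factor_prod (block k) \<omega>) ^ 4) = expectation (\<lambda>\<omega>. \<Sum>ks\<in>?A. tuple_prod ks \<omega>)"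
    by (simp only: power_sum_as_lists[OF finite_atLeastAtMost] tuple_prod_as_prod)
  also have "\<dots> = (\<Sum>ks\<in>?A. expectation (tuple_prod ks))"
    by (rule Bochner_Integration.integral_sum) (auto intro: tuple_prod_integrable)
  also have "\<dots> \<le> (\<Sum>ks\<in>?A. g (sort ks))"
    unfolding g_def tuple_prod_sort by (rule sum_mono) simp
  also have "\<dots> \<le> 256 * (\<Sum>ks\<in>?A. if sorted ks then g ks else 0)"
    by (rule sum_sorted_lists_4) (simp_all add: g_def)
  also have "(\<Sum>ks\<in>?A. if sorted ks then g ks else 0)
      = (\<Sum>k1\<in>?K. \<Sum>k2\<in>?K. \<Sum>k3\<in>?K. \<Sum>k4\<in>?K. if sorted [k1, k2, k3, k4] then g [k1, k2, k3, k4] else 0)"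
    by (rule sum_lists_of_length_4) simp
  finally show ?thesis unfolding g_def .
qed

theorem block_fourth_moment:
  "expectation (\<lambda>\<omega>. (\<Sum>k\<in>{u..v}. factor_prod (block k) \<omega>) ^ 4) \<le> fourth_const * real (card {u..v}) ^ 2"
proof -
  let ?K = "{u..v}" and ?S = "real (card {u..v}) ^ 2 * (1 / (1 - rho)) ^ 2"
  have "(\<Sum>k1\<in>?K. \<Sum>k2\<in>?K. \<Sum>k3\<in>?K. \<Sum>k4\<in>?K.
         if sorted [k1, k2, k3, k4] then \<bar>expectation (tuple_prod [k1, k2, k3, k4])\<bar> else 0)
      \<le> (\<Sum>k1\<in>?K. \<Sum>k2\<in>?K. \<Sum>k3\<in>?K. \<Sum>k4\<in>?K.
         tuple_const * (geo_weight rho k1 k2 * geo_weight rho k2 k3)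
         + tuple_const * (geo_weight rho k1 k2 * geo_weight rho k3 k4))"
    by (intro sum_mono tuple_moment_geo_weight)
  also have "\<dots> = tuple_const * (\<Sum>k1\<in>?K. \<Sum>k2\<in>?K. \<Sum>k3\<in>?K. \<Sum>k4\<in>?K. geo_weight rho k1 k2 * geo_weight rho k2 k3)
      + tuple_const * (\<Sum>k1\<in>?K. \<Sum>k2\<in>?K. \<Sum>k3\<in>?K. \<Sum>k4\<in>?K. geo_weight rho k1 k2 * geo_weight rho k3 k4)"
    by (simp add: sum.distrib sum_distrib_left mult_ac)
  also have "\<dots> \<le> tuple_const * ?S + tuple_const * ?S"
    using tuple_const_nonneg geo_weight_chain_sum[OF rho_bounds, of ?K] geo_weight_pair_sum[OF rho_bounds, of ?K]
    by (intro add_mono mult_left_mono) auto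
  finally have "256 * (\<Sum>k1\<in>?K. \<Sum>k2\<in>?K. \<Sum>k3\<in>?K. \<Sum>k4\<in>?K.
         if sorted [k1, k2, k3, k4] then \<bar>expectation (tuple_prod [k1, k2, k3, k4])\<bar> else 0)
      \<le> fourth_const * real (card {u..v}) ^ 2"
    unfolding fourth_const_def by (simp add: algebra_simps)
  then show ?thesis using fourth_moment_sorted_expansion by linarith
qed

end

context mixing_setting
begin

definition centred_term :: "(nat \<Rightarrow> nat \<Rightarrow> nat) \<Rightarrow> nat \<Rightarrow> nat \<Rightarrow> 'a \<Rightarrow> real" where
  "centred_term q i k \<omega> = (X i (q i k) \<omega> - mean i) * (\<Prod>j\<in>{Suc i..L}. X j (q j k) \<omega>)"

text \<open>If on {u..v} every q_j grows at least linearly and q_i lies below q_j for i < j, the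
  i-th sum is a block sum and has fourth moment O((v - u)^2).\<close>
lemma centred_term_fourth_moment:
  fixes q :: "nat \<Rightarrow> nat \<Rightarrow> nat"
  assumes i: "i \<in> {1..L}"
    and q_growth: "\<And>j x y. j \<in> {1..L} \<Longrightarrow> u \<le> x \<Longrightarrow> x \<le> y \<Longrightarrow> y \<le> v \<Longrightarrow> q j x + (y - x) \<le> q j y"
    and q_order: "\<And>i j k k'. i \<in> {1..L} \<Longrightarrow> j \<in> {Suc i..L} \<Longrightarrow> k \<in> {u..v} \<Longrightarrow> k' \<in> {u..v} \<Longrightarrow> q i k \<le> q j k'"
  shows "integrable M (\<lambda>\<omega>. (\<Sum>k\<in>{u..v}. centred_term q i k \<omega>) ^ 4)"
    and "expectation (\<lambda>\<omega>. (\<Sum>k\<in>{u..v}. centred_term q i k \<omega>) ^ 4) \<le> fourth_const * real (card {u..v}) ^ 2"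
proof -
  define tail where "tail k = map (\<lambda>j. (j, q j k, 0::real)) [Suc i..<Suc L]" for k
  interpret B: centred_block M L X D F \<kappa> i "q i" tail u v
  proof (unfold_locales)
    show "admissible (tail k)" for k
      unfolding tail_def admissible_def using D_nonneg by auto
    show "length (tail k) \<le> L" for k unfolding tail_def using i by auto
    show "q i k + (k' - k) \<le> q i k'" if "k \<in> {u..v}" "k' \<in> {u..v}" "k \<le> k'" for k k'
      using q_growth[OF i] that by auto
    show "factor_times (tail k') \<subseteq> {q i k..}" if "k \<in> {u..v}" "k' \<in> {u..v}" for k k'
      unfolding tail_def factor_times_def using q_order[OF i _ that] by auto
  qed (rule i)
  have block: "factor_prod (B.block k) = centred_term q i k" for k
  proof
    fix \<omega>
    have "factor_prod (tail k) \<omega> = (\<Prod>j\<leftarrow>[Suc i..<Suc L]. X j (q j k) \<omega>)"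
      unfolding tail_def factor_prod_def by (simp add: o_def)
    also have "\<dots> = (\<Prod>j\<in>set [Suc i..<Suc L]. X j (q j k) \<omega>)"
      by (rule prod.distinct_set_conv_list[symmetric]) simp
    also have "set [Suc i..<Suc L] = {Suc i..L}" by auto
    finally show "factor_prod (B.block k) \<omega> = centred_term q i k \<omega>"
      unfolding B.block_def B.lead_factor_def centred_term_def by simp
  qed
  have "(\<lambda>\<omega>. (\<Sum>k\<in>{u..v}. factor_prod (B.block k) \<omega>) ^ 4)
      = (\<lambda>\<omega>. \<Sum>ks\<in>lists_of_length {u..v} 4. B.tuple_prod ks \<omega>)"
    by (simp only: power_sum_as_lists[OF finite_atLeastAtMost] B.tuple_prod_as_prod)
  then show "integrable M (\<lambda>\<omega>. (\<Sum>k\<in>{u..v}. centred_term q i k \<omega>) ^ 4)"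
    unfolding block by (auto intro!: B.tuple_prod_integrable)
  show "expectation (\<lambda>\<omega>. (\<Sum>k\<in>{u..v}. centred_term q i k \<omega>) ^ 4) \<le> fourth_const * real (card {u..v}) ^ 2"
    using B.block_fourth_moment unfolding block .
qed

lemma mean_prod_power4_le: "i \<in> {1..L} \<Longrightarrow> (\<Prod>j\<in>{1..<i}. mean j) ^ 4 \<le> factor_bound ^ (4 * L)"
proof -
  assume i: "i \<in> {1..L}"
  have "\<bar>mean j\<bar> \<le> factor_bound" if "j \<in> {1..L}" for j
    using mean_bound[OF that] D_le_factor_bound abs_ge_self[of D] by linarith
  then have "\<bar>\<Prod>j\<in>{1..<i}. mean j\<bar> \<le> (\<Prod>j\<in>{1..<i}. factor_bound)"
    unfolding abs_prod using i by (intro prod_mono) auto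
  also have "\<dots> \<le> factor_bound ^ L"
    using power_increasing[of "i - 1" L factor_bound] factor_bound_ge_1 i by auto
  finally have "\<bar>\<Prod>j\<in>{1..<i}. mean j\<bar> ^ 4 \<le> (factor_bound ^ L) ^ 4" by (intro power_mono) auto
  then show ?thesis by (simp add: power_even_abs_numeral mult.commute flip: power_mult)
qed

theorem fourth_moment_bound:
  fixes q :: "nat \<Rightarrow> nat \<Rightarrow> nat"
  assumes q_growth: "\<And>j x y. j \<in> {1..L} \<Longrightarrow> u \<le> x \<Longrightarrow> x \<le> y \<Longrightarrow> y \<le> v \<Longrightarrow> q j x + (y - x) \<le> q j y"
    and q_order: "\<And>i j k k'. i \<in> {1..L} \<Longrightarrow> j \<in> {Suc i..L} \<Longrightarrow> k \<in> {u..v} \<Longrightarrow> k' \<in> {u..v} \<Longrightarrow> q i k \<le> q j k'"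
  shows "expectation (\<lambda>\<omega>. (\<Sum>k\<in>{u..v}. (\<Prod>j\<in>{1..L}. X j (q j k) \<omega>) - (\<Prod>j\<in>{1..L}. expectation (X j 0))) ^ 4)
    \<le> real L ^ 4 * factor_bound ^ (4 * L) * fourth_const * real (card {u..v}) ^ 2"
proof -
  define c where "c i = (\<Prod>j\<in>{1..<i}. mean j)" for i
  define S where "S i \<omega> = (\<Sum>k\<in>{u..v}. centred_term q i k \<omega>)" for i \<omega>
  note moment = centred_term_fourth_moment[OF _ q_growth q_order]
  have split: "(\<Sum>k\<in>{u..v}. (\<Prod>j\<in>{1..L}. X j (q j k) \<omega>) - (\<Prod>j\<in>{1..L}. expectation (X j 0)))
      = (\<Sum>i\<in>{1..L}. c i * S i \<omega>)" for \<omega>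
    unfolding c_def S_def centred_term_def mean_def[symmetric] by (rule sum_prod_centering)
  have int: "integrable M (\<lambda>\<omega>. real L ^ 3 * (\<Sum>i\<in>{1..L}. c i ^ 4 * S i \<omega> ^ 4))"
    using moment(1) unfolding S_def by (intro integrable_mult_right Bochner_Integration.integrable_sum) auto
  have "expectation (\<lambda>\<omega>. (\<Sum>i\<in>{1..L}. c i * S i \<omega>) ^ 4)
      \<le> expectation (\<lambda>\<omega>. real L ^ 3 * (\<Sum>i\<in>{1..L}. c i ^ 4 * S i \<omega> ^ 4))"
  proof (rule integral_mono_AE'[OF int])
    show "AE \<omega> in M. (\<Sum>i\<in>{1..L}. c i * S i \<omega>) ^ 4 \<le> real L ^ 3 * (\<Sum>i\<in>{1..L}. c i ^ 4 * S i \<omega> ^ 4)"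
      using power4_sum_le[of "\<lambda>i. c i * S i _" "{1..L}"] by (simp add: power_mult_distrib)
    show "AE \<omega> in M. 0 \<le> real L ^ 3 * (\<Sum>i\<in>{1..L}. c i ^ 4 * S i \<omega> ^ 4)"
      by (intro AE_I2 mult_nonneg_nonneg sum_nonneg) (auto simp: zero_le_even_power)
  qed
  also have "\<dots> = real L ^ 3 * (\<Sum>i\<in>{1..L}. c i ^ 4 * expectation (\<lambda>\<omega>. S i \<omega> ^ 4))"
    using moment(1) unfolding S_def by (subst integral_mult_right_zero, subst Bochner_Integration.integral_sum) auto
  also have "\<dots> \<le> real L ^ 3 * (\<Sum>i\<in>{1..L}. factor_bound ^ (4 * L) * (fourth_const * real (card {u..v}) ^ 2))"
    using mean_prod_power4_le moment(2) factor_bound_ge_1 unfolding c_def S_def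
    by (intro mult_left_mono sum_mono mult_mono) (auto intro: integral_nonneg_AE)
  also have "\<dots> = real L ^ 4 * factor_bound ^ (4 * L) * fourth_const * real (card {u..v}) ^ 2"
    by (simp add: power_Suc power_numeral_reduce algebra_simps)
  finally show ?thesis unfolding split .
qed

end

text \<open>Lemma 3.8: the index functions are ordered and growing on [m+1, n], so the fourth moment
  bound applies with a constant independent of N, n, m.\<close>
theorem lemma3p8:
  fixes M :: "'a measure" and L :: nat and X :: "nat \<Rightarrow> nat \<Rightarrow> 'a \<Rightarrow> real" and D :: real
    and F :: "ereal \<Rightarrow> ereal \<Rightarrow> 'a measure" and q :: "nat \<Rightarrow> nat \<Rightarrow> nat"
    and r p :: nat and \<gamma> n\<^sub>0 :: real
  assumes P: "prob_space M"
    and l: "L \<ge> 1"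
    and stat: "\<And>j. j \<in> {1..L} \<Longrightarrow> stationary_proc M (X j)"
    and bdd: "\<And>j n. j \<in> {1..L} \<Longrightarrow> AE \<omega> in M. \<bar>X j n \<omega>\<bar> \<le> D"
    and subalg: "\<And>k l. k \<in> ext_int_idx \<Longrightarrow> l \<in> ext_int_idx \<Longrightarrow> k \<le> l \<Longrightarrow> subalgebra M (F k l)"
    and mono: "\<And>k l k' l'. k \<in> ext_int_idx \<Longrightarrow> l \<in> ext_int_idx \<Longrightarrow> k' \<in> ext_int_idx \<Longrightarrow> l' \<in> ext_int_idx
        \<Longrightarrow> k \<le> l \<Longrightarrow> k' \<le> k \<Longrightarrow> l \<le> l' \<Longrightarrow> sets (F k l) \<subseteq> sets (F k' l')"
    and C1: "\<exists>\<kappa>>0. \<forall>n. alpha_mix M F n + (MAX j\<in>{1..L}. beta_approx M F (X j) n)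
                \<le> (1 / \<kappa>) * exp (- \<kappa> * real n)"
    and C2: "r > 0" "\<And>n. q 1 n = r * n + p"
    and gam: "0 < \<gamma>" "\<gamma> < 1" and n0: "n\<^sub>0 > 1"
    and C3: "\<And>j n. j \<in> {2..L} \<Longrightarrow> real n \<ge> n\<^sub>0 \<Longrightarrow> real (q j (n + 1)) \<ge> real (q j n) + real n powr \<gamma>"
    and C4: "\<And>j n. j \<in> {1..<L} \<Longrightarrow> real n \<ge> n\<^sub>0 \<Longrightarrow>
               real (q (j + 1) (nat \<lfloor>real n powr (1 - \<gamma>)\<rfloor>)) \<ge> real (q j n) * real n powr \<gamma>"
  shows "\<exists>C>0. \<forall>N n m::nat. N \<ge> n \<and> n > m \<and> real_of_int \<lfloor>real N powr (1 - \<gamma>)\<rfloor> \<le> real m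
            \<and> real_of_int \<lfloor>real N powr (1 - \<gamma>)\<rfloor> \<ge> n\<^sub>0 \<longrightarrow>
           prob_space.expectation M (\<lambda>\<omega>. (\<Sum>k\<in>{m+1..n}.
               (\<Prod>j\<in>{1..L}. X j (q j k) \<omega>) - (\<Prod>j\<in>{1..L}. prob_space.expectation M (X j 0))) ^ 4)
             \<le> C * (real n - real m) ^ 2"
proof -
  obtain \<kappa> where \<kappa>: "\<kappa> > 0" "\<And>n. alpha_mix M F n + (MAX j\<in>{1..L}. beta_approx M F (X j) n)
      \<le> (1 / \<kappa>) * exp (- \<kappa> * real n)" using C1 by blast
  interpret mixing_setting M L X D F \<kappa>
    by (rule mixing_setting.intro) (use P l stat bdd subalg mono \<kappa> in auto)
  have growth: "q j x + (y - x) \<le> q j y" if "j \<in> {1..L}" "n\<^sub>0 \<le> real x" "x \<le> y" for j x y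
    by (rule index_growth[where q = q and r = r and p = p, OF C2 gam(1) n0 C3 that])
  define C where "C = real L ^ 4 * factor_bound ^ (4 * L) * fourth_const + 1"
  have "0 \<le> real L ^ 4 * factor_bound ^ (4 * L) * fourth_const"
    using fourth_const_nonneg factor_bound_ge_1 by simp
  then have C: "C > 0" "real L ^ 4 * factor_bound ^ (4 * L) * fourth_const \<le> C" unfolding C_def by linarith+
  show ?thesis
  proof (intro exI[of _ C] conjI allI impI C(1))
    fix N n m :: nat
    let ?s = "real_of_int \<lfloor>real N powr (1 - \<gamma>)\<rfloor>"
    assume h: "N \<ge> n \<and> n > m \<and> ?s \<le> real m \<and> ?s \<ge> n\<^sub>0"
    have late: "n\<^sub>0 \<le> real k" "nat \<lfloor>real N powr (1 - \<gamma>)\<rfloor> \<le> k" if "m + 1 \<le> k" for k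
      using h that by (linarith, simp add: nat_le_iff)
    have "expectation (\<lambda>\<omega>. (\<Sum>k\<in>{m+1..n}. (\<Prod>j\<in>{1..L}. X j (q j k) \<omega>) - (\<Prod>j\<in>{1..L}. expectation (X j 0))) ^ 4)
        \<le> real L ^ 4 * factor_bound ^ (4 * L) * fourth_const * real (card {m+1..n}) ^ 2"
    proof (rule fourth_moment_bound)
      show "q j x + (y - x) \<le> q j y" if "j \<in> {1..L}" "m + 1 \<le> x" "x \<le> y" "y \<le> n" for j x y
        using growth[OF that(1) late(1)[OF that(2)] that(3)] .
      show "q i k \<le> q j k'" if "i \<in> {1..L}" "j \<in> {Suc i..L}" "k \<in> {m + 1..n}" "k' \<in> {m + 1..n}" for i j k k'
        using index_order[where q = q and L = L, OF growth C4 gam n0, of N i j k k'] that h late(2) by auto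
    qed
    also have "\<dots> = real L ^ 4 * factor_bound ^ (4 * L) * fourth_const * (real n - real m) ^ 2"
      using h by simp
    also have "\<dots> \<le> C * (real n - real m) ^ 2" using C(2) by (rule mult_right_mono) simp
    finally show "expectation (\<lambda>\<omega>. (\<Sum>k\<in>{m+1..n}. (\<Prod>j\<in>{1..L}. X j (q j k) \<omega>)
        - (\<Prod>j\<in>{1..L}. expectation (X j 0))) ^ 4) \<le> C * (real n - real m) ^ 2" .
  qed
qed

end
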